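(* Let $k\in\mathbb N$, let $\pi$ be a partition of $\{1,\dots,k\}$, and let $\mathcal I^*(\pi)$ be the set of graphs consistent with $\pi$ having exactly $k-\#\pi+1$ connected components, where $\#\pi$ is the number of blocks of $\pi$. (i) If $\pi$ is crossing, then $\mathcal I^*(\pi)=\emptyset$. (ii) If $\pi$ is non-crossing, then $\mathcal I^*(\pi)$ consists of exactly one graph $G$, and $\pi=K(\eta)$, where $\eta$ is the partition of $\{1,\dots,k\}$ whose blocks are the vertex sets of the connected components of $G$ and $K$ denotes the Kreweras complement.
   Context: Let $\pi$ be a partition of $\{1,\dots,k\}$ with blocks $B^{(1)},\dots,B^{(q)}$; indices are taken cyclically, i.e. $0$ is identified with $k$ and $k+1$ with $1$. The closed blocks are $\overline B^{(s)}=B^{(s)}\cup\{l\in\{1,\dots,k\}: l-1\in B^{(s)}\}$. The multiplicity $m_\pi(l)$ of $l\in\{1,\dots,k\}$ is $2$ if $l$ and $l-1$ lie in the same block of $\pi$, and $1$ otherwise. A graph consistent with $\pi$ is an undirected multigraph $G$ (loops allowed, a loop contributing $2$ to the degree) with vertex set $\{1,\dots,k\}$ and $k$ edges, whose edge set can be written as a disjoint union $E^{(1)}\cup\dots\cup E^{(q)}$ such that for each $s$, all edges of $E^{(s)}$ have both ends in $\overline B^{(s)}$ and, in the subgraph with vertex set $\overline B^{(s)}$ and edge set $E^{(s)}$, every vertex $l$ has degree $m_\pi(l)$. A partition is crossing if there exist $i<j<i'<j'$ with $i,i'$ in one block and $j,j'$ in a different block; otherwise it is non-crossing. For a non-crossing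 partition $\eta$ of $\{1,\dots,k\}$, its Kreweras complement $K(\eta)$ is the largest (with respect to refinement) partition $\sigma$ of $\{1,\dots,k\}$ such that the partition of the interlaced ordered set $1<\bar1<2<\bar2<\dots<k<\bar k$ whose blocks are the blocks of $\eta$ (on the unbarred elements) together with the blocks of $\sigma$ (placed on the barred elements) is non-crossing. *)

theory Defs
  imports Main "HOL-Library.Multiset" "HOL-Library.Disjoint_Sets"
begin

text \<open>Cyclic predecessor on {1..k}: 0 is identified with k.\<close>
definition cprev :: "nat \<Rightarrow> nat \<Rightarrow> nat" where
  "cprev k l = (if l = 1 then k else l - 1)"

definition closed_block :: "nat \<Rightarrow> nat set \<Rightarrow> nat set" where
  "closed_block k B = B \<union> {l \<in> {1..k}. cprev k l \<in> B}"

definition mult_pi :: "nat \<Rightarrow> nat set set \<Rightarrow> nat \<Rightarrow> nat" where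
  "mult_pi k P l = (if \<exists>B\<in>P. l \<in> B \<and> cprev k l \<in> B then 2 else 1)"

text \<open>Undirected multigraphs on {1..k}: a multiset of edges; an edge is the set
  of its endpoints, {a} for a loop at a.\<close>
definition is_mgraph :: "nat \<Rightarrow> nat set multiset \<Rightarrow> bool" where
  "is_mgraph k G \<longleftrightarrow> (\<forall>e\<in>#G. e \<subseteq> {1..k} \<and> (card e = 1 \<or> card e = 2))"

definition mdeg :: "nat set multiset \<Rightarrow> nat \<Rightarrow> nat" where
  "mdeg E l = (\<Sum>e\<in>#E. if e = {l} then 2 else if l \<in> e then 1 else 0)"

definition consistent :: "nat \<Rightarrow> nat set set \<Rightarrow> nat set multiset \<Rightarrow> bool" where
  "consistent k P G \<longleftrightarrow> is_mgraph k G \<and> size G = k \<and>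
     (\<exists>E :: nat set \<Rightarrow> nat set multiset.
        G = (\<Sum>B\<in>P. E B) \<and>
        (\<forall>B\<in>P. (\<forall>e\<in>#E B. e \<subseteq> closed_block k B) \<and>
                (\<forall>l\<in>closed_block k B. mdeg (E B) l = mult_pi k P l)))"

definition madj :: "nat set multiset \<Rightarrow> (nat \<times> nat) set" where
  "madj G = {(u, v). \<exists>e\<in>#G. u \<in> e \<and> v \<in> e}"

definition components :: "nat \<Rightarrow> nat set multiset \<Rightarrow> nat set set" where
  "components k G = {1..k} // ((madj G)\<^sup>*)"

definition crossing :: "nat set set \<Rightarrow> bool" where
  "crossing P \<longleftrightarrow> (\<exists>B\<in>P. \<exists>B'\<in>P. B \<noteq> B' \<and>
     (\<exists>i j i' j'. i < j \<and> j < i' \<and> i' < j' \<and> i \<in> B \<and> i' \<in> B \<and> j \<in> B' \<and> j' \<in> B'))"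

definition refines :: "nat set set \<Rightarrow> nat set set \<Rightarrow> bool" where
  "refines S T \<longleftrightarrow> (\<forall>B\<in>S. \<exists>C\<in>T. B \<subseteq> C)"

text \<open>Interlacing 1 < 1bar < 2 < 2bar < ... < k < kbar, encoded as i \<mapsto> 2i-1, ibar \<mapsto> 2i.\<close>
definition interlace :: "nat set set \<Rightarrow> nat set set \<Rightarrow> nat set set" where
  "interlace N S = ((\<lambda>B. (\<lambda>i. 2 * i - 1) ` B) ` N) \<union> ((\<lambda>B. (\<lambda>i. 2 * i) ` B) ` S)"

definition kreweras_admissible :: "nat \<Rightarrow> nat set set \<Rightarrow> nat set set \<Rightarrow> bool" where
  "kreweras_admissible k N S \<longleftrightarrow> partition_on {1..k} S \<and> \<not> crossing (interlace N S)"

definition kreweras :: "nat \<Rightarrow> nat set set \<Rightarrow> nat set set" where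
  "kreweras k N = (THE S. kreweras_admissible k N S \<and>
       (\<forall>T. kreweras_admissible k N T \<longrightarrow> refines T S))"

definition Istar :: "nat \<Rightarrow> nat set set \<Rightarrow> nat set multiset set" where
  "Istar k P = {G. consistent k P G \<and> card (components k G) = k - card P + 1}"

end

theory Submission
  imports Defs
begin

text \<open>A graph consistent with a partition P is a union of block graphs, in which a vertex v has
  degree [v \<in> B] + [v - 1 \<in> B] in the graph of the block B. We work on an arbitrary finite
  S \<subseteq> \<nat> with its cyclic order. Deleting a vertex l merges the blocks of l - 1 and l and turns the
  two edge ends at l either into a dropped loop, losing a component, or into an edge x - y,
  keeping all components. Induction on |S| gives #components + #blocks \<le> |S| + 1, with equality
  only if P is non-crossing and every block graph is the canonical one, which joins the successor
  of b \<in> B in S to the successor of b in B: a crossing either survives the deletion of a vertex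
  outside two crossing blocks, or P has two blocks and at least four places where the block changes
  along the cycle. Conversely the canonical graph attains the bound. Its components form a
  non-crossing partition \<eta>, and since each block of P cuts the cycle into arcs that no edge leaves,
  P is the largest partition interlacing \<eta> without crossings, that is P = K(\<eta>).\<close>

section \<open>Cyclic successor and predecessor\<close>

definition cyc_next :: "nat set \<Rightarrow> nat \<Rightarrow> nat" where
  "cyc_next X b = (if \<exists>c\<in>X. b < c then Min {c\<in>X. b < c} else Min X)"

definition cyc_prev :: "nat set \<Rightarrow> nat \<Rightarrow> nat" where
  "cyc_prev X b = (if \<exists>c\<in>X. c < b then Max {c\<in>X. c < b} else Max X)"

lemma cyc_next_char:
  assumes "finite X" "X \<noteq> {}"
  shows "cyc_next X b \<in> X \<and> (if \<exists>c\<in>X. b<c then b < cyc_next X b \<and> (\<forall>d\<in>X. b<d \<longrightarrow> cyc_next X b \<le> d)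
          else (\<forall>d\<in>X. cyc_next X b \<le> d))"
proof (cases "\<exists>c\<in>X. b<c")
  case True
  then have ne: "{c\<in>X. b < c} \<noteq> {}" by auto
  have f: "finite {c\<in>X. b < c}" using assms by auto
  have "Min {c\<in>X. b < c} \<in> {c\<in>X. b < c}" using Min_in[OF f ne] .
  then show ?thesis using True Min_le[OF f] unfolding cyc_next_def by auto
next
  case False
  then show ?thesis using assms Min_in Min_le unfolding cyc_next_def by auto
qed

lemma cyc_prev_char:
  assumes "finite X" "X \<noteq> {}"
  shows "cyc_prev X b \<in> X \<and> (if \<exists>c\<in>X. c<b then cyc_prev X b < b \<and> (\<forall>d\<in>X. d<b \<longrightarrow> d \<le> cyc_prev X b)
          else (\<forall>d\<in>X. d \<le> cyc_prev X b))"
proof (cases "\<exists>c\<in>X. c<b")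
  case True
  then have ne: "{c\<in>X. c < b} \<noteq> {}" by auto
  have f: "finite {c\<in>X. c < b}" using assms by auto
  have "Max {c\<in>X. c < b} \<in> {c\<in>X. c < b}" using Max_in[OF f ne] .
  then show ?thesis using True Max_ge[OF f] unfolding cyc_prev_def by auto
next
  case False
  then show ?thesis using assms Max_in Max_ge unfolding cyc_prev_def by auto
qed

lemma cyc_next_eqI:
  assumes "finite X" "c \<in> X"
    "(b < c \<and> (\<forall>d\<in>X. b<d \<longrightarrow> c \<le> d)) \<or> ((\<forall>d\<in>X. d \<le> b) \<and> (\<forall>d\<in>X. c \<le> d))"
  shows "cyc_next X b = c"
proof -
  have ne: "X \<noteq> {}" using assms by auto
  note h = cyc_next_char[OF assms(1) ne, of b]
  show ?thesis using assms(2,3) h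
    by (smt (verit, ccfv_SIG) le_antisym linorder_not_le)
qed

lemma cyc_prev_eqI:
  assumes "finite X" "c \<in> X"
    "(c < b \<and> (\<forall>d\<in>X. d<b \<longrightarrow> d \<le> c)) \<or> ((\<forall>d\<in>X. b \<le> d) \<and> (\<forall>d\<in>X. d \<le> c))"
  shows "cyc_prev X b = c"
proof -
  have ne: "X \<noteq> {}" using assms by auto
  note h = cyc_prev_char[OF assms(1) ne, of b]
  show ?thesis using assms(2,3) h
    by (smt (verit, ccfv_SIG) le_antisym linorder_not_le)
qed

lemma cyc_next_in: "finite X \<Longrightarrow> X \<noteq> {} \<Longrightarrow> cyc_next X b \<in> X"
  using cyc_next_char by blast
lemma cyc_prev_in: "finite X \<Longrightarrow> X \<noteq> {} \<Longrightarrow> cyc_prev X b \<in> X"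
  using cyc_prev_char by blast

lemma cyc_next_prev: assumes "finite X" "b \<in> X" shows "cyc_next X (cyc_prev X b) = b"
proof -
  have ne: "X \<noteq> {}" using assms by auto
  note p = cyc_prev_char[OF assms(1) ne, of b]
  show ?thesis
  proof (rule cyc_next_eqI[OF assms(1,2)])
    show "(cyc_prev X b < b \<and> (\<forall>d\<in>X. cyc_prev X b < d \<longrightarrow> b \<le> d)) \<or> ((\<forall>d\<in>X. d \<le> cyc_prev X b) \<and> (\<forall>d\<in>X. b \<le> d))"
    proof (cases "\<exists>c\<in>X. c<b")
      case True
      then have "cyc_prev X b < b" "\<forall>d\<in>X. d<b \<longrightarrow> d \<le> cyc_prev X b" using p by auto
      then show ?thesis by (meson leI leD)
    next
      case False
      then have "\<forall>d\<in>X. d \<le> cyc_prev X b" using p by auto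
      then show ?thesis using False by (simp add: not_less)
    qed
  qed
qed

lemma cyc_prev_next: assumes "finite X" "b \<in> X" shows "cyc_prev X (cyc_next X b) = b"
proof -
  have ne: "X \<noteq> {}" using assms by auto
  note p = cyc_next_char[OF assms(1) ne, of b]
  show ?thesis
  proof (rule cyc_prev_eqI[OF assms(1,2)])
    show "(b < cyc_next X b \<and> (\<forall>d\<in>X. d < cyc_next X b \<longrightarrow> d \<le> b)) \<or> ((\<forall>d\<in>X. cyc_next X b \<le> d) \<and> (\<forall>d\<in>X. d \<le> b))"
    proof (cases "\<exists>c\<in>X. b<c")
      case True
      then have "b < cyc_next X b" "\<forall>d\<in>X. b<d \<longrightarrow> cyc_next X b \<le> d" using p by auto
      then show ?thesis by (meson leI leD)
    next
      case False
      then have "\<forall>d\<in>X. cyc_next X b \<le> d" using p by auto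
      then show ?thesis using False by (simp add: not_less)
    qed
  qed
qed

lemma cyc_next_inj: "finite X \<Longrightarrow> a \<in> X \<Longrightarrow> b \<in> X \<Longrightarrow> cyc_next X a = cyc_next X b \<Longrightarrow> a = b"
  by (metis cyc_prev_next)

lemma cyc_next_eq_iff: "finite X \<Longrightarrow> a \<in> X \<Longrightarrow> c \<in> X \<Longrightarrow> cyc_next X a = c \<longleftrightarrow> a = cyc_prev X c"
  by (metis cyc_next_prev cyc_prev_next)

lemma cyc_next_singleton: "cyc_next {b} a = b" by (rule cyc_next_eqI) auto
lemma cyc_prev_singleton: "cyc_prev {b} a = b" by (rule cyc_prev_eqI) auto

lemma cyc_next_neq:
  assumes "finite X" "b \<in> X" "card X \<ge> 2" shows "cyc_next X b \<noteq> b"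
proof
  assume e: "cyc_next X b = b"
  have ne: "X \<noteq> {}" using assms by auto
  note p = cyc_next_char[OF assms(1) ne, of b]
  obtain c where c: "c \<in> X" "c \<noteq> b"
    using assms by (metis card_le_Suc0_iff_eq not_less_eq_eq numeral_2_eq_2)
  show False using p e c by (auto split: if_splits) (meson le_antisym linorder_not_le)+
qed

lemma cyc_prev_neq:
  assumes "finite X" "b \<in> X" "card X \<ge> 2" shows "cyc_prev X b \<noteq> b"
  by (metis assms cyc_next_neq cyc_next_prev)

lemma cyc_next_subset:
  assumes "finite Y" "X \<subseteq> Y" "cyc_next Y b \<in> X"
  shows "cyc_next X b = cyc_next Y b"
proof -
  have fX: "finite X" using assms finite_subset by blast
  have ne: "Y \<noteq> {}" using assms by auto
  note p = cyc_next_char[OF assms(1) ne, of b]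
  show ?thesis
  proof (rule cyc_next_eqI[OF fX assms(3)], cases "\<exists>c\<in>Y. b<c")
    case True
    then show "b < cyc_next Y b \<and> (\<forall>d\<in>X. b < d \<longrightarrow> cyc_next Y b \<le> d) \<or> (\<forall>d\<in>X. d \<le> b) \<and> (\<forall>d\<in>X. cyc_next Y b \<le> d)"
      using p assms(2) by auto
  next
    case False
    then show "b < cyc_next Y b \<and> (\<forall>d\<in>X. b < d \<longrightarrow> cyc_next Y b \<le> d) \<or> (\<forall>d\<in>X. d \<le> b) \<and> (\<forall>d\<in>X. cyc_next Y b \<le> d)"
      using p assms(2) by (auto simp: not_less)
  qed
qed

lemma cyc_prev_subset:
  assumes "finite Y" "X \<subseteq> Y" "cyc_prev Y b \<in> X"
  shows "cyc_prev X b = cyc_prev Y b"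
proof -
  have fX: "finite X" using assms finite_subset by blast
  have ne: "Y \<noteq> {}" using assms by auto
  note p = cyc_prev_char[OF assms(1) ne, of b]
  show ?thesis
  proof (rule cyc_prev_eqI[OF fX assms(3)], cases "\<exists>c\<in>Y. c<b")
    case True
    then show "cyc_prev Y b < b \<and> (\<forall>d\<in>X. d < b \<longrightarrow> d \<le> cyc_prev Y b) \<or> (\<forall>d\<in>X. b \<le> d) \<and> (\<forall>d\<in>X. d \<le> cyc_prev Y b)"
      using p assms(2) by auto
  next
    case False
    then show "cyc_prev Y b < b \<and> (\<forall>d\<in>X. d < b \<longrightarrow> d \<le> cyc_prev Y b) \<or> (\<forall>d\<in>X. b \<le> d) \<and> (\<forall>d\<in>X. d \<le> cyc_prev Y b)"
      using p assms(2) by (auto simp: not_less)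
  qed
qed

lemma cyc_next_remove:
  assumes "finite X" "l \<in> X" "b \<in> X" "b \<noteq> l" "card X \<ge> 2"
  shows "cyc_next (X - {l}) b = (if cyc_next X b = l then cyc_next X l else cyc_next X b)"
proof -
  have ne: "X \<noteq> {}" using assms by auto
  have f': "finite (X - {l})" using assms by auto
  have ne': "X - {l} \<noteq> {}" using assms by auto
  note p = cyc_next_char[OF assms(1) ne, of b]
  note q = cyc_next_char[OF assms(1) ne, of l]
  show ?thesis
  proof (cases "cyc_next X b = l")
    case False
    then show ?thesis using cyc_next_subset[OF assms(1), of "X - {l}" b] p by auto
  next
    case True
    have ql: "cyc_next X l \<noteq> l" using cyc_next_neq assms by blast
    have "cyc_next (X - {l}) b = cyc_next X l"
      apply (rule cyc_next_eqI[OF f'])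
      using p q True ql assms(3,4) by (auto split: if_splits) (smt (verit) leD le_antisym less_imp_le_nat not_le)+
    then show ?thesis using True by simp
  qed
qed

lemma cyc_prev_remove:
  assumes "finite X" "l \<in> X" "b \<in> X" "b \<noteq> l" "card X \<ge> 2"
  shows "cyc_prev (X - {l}) b = (if cyc_prev X b = l then cyc_prev X l else cyc_prev X b)"
proof -
  have ne: "X \<noteq> {}" using assms by auto
  have f': "finite (X - {l})" using assms by auto
  note p = cyc_prev_char[OF assms(1) ne, of b]
  note q = cyc_prev_char[OF assms(1) ne, of l]
  show ?thesis
  proof (cases "cyc_prev X b = l")
    case False
    then show ?thesis using cyc_prev_subset[OF assms(1), of "X - {l}" b] p by auto
  next
    case True
    have ql: "cyc_prev X l \<noteq> l" using cyc_prev_neq assms by blast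
    have "cyc_prev (X - {l}) b = cyc_prev X l"
      apply (rule cyc_prev_eqI[OF f'])
      using p q True ql assms(3,4) by (auto split: if_splits) (smt (verit) leD le_antisym less_imp_le_nat not_le)+
    then show ?thesis using True by simp
  qed
qed

lemma cyc_prev_atLeastAtMost:
  assumes "v \<in> {1..k}" shows "cyc_prev {1..k} v = cprev k v"
proof (rule cyc_prev_eqI)
  show "cprev k v \<in> {1..k}" using assms by (auto simp: cprev_def)
  show "(cprev k v < v \<and> (\<forall>d\<in>{1..k}. d < v \<longrightarrow> d \<le> cprev k v)) \<or>
    ((\<forall>d\<in>{1..k}. v \<le> d) \<and> (\<forall>d\<in>{1..k}. d \<le> cprev k v))"
    using assms by (auto simp: cprev_def)
qed simp


section \<open>Degrees and components of multigraphs\<close>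

lemma mdeg_add[simp]: "mdeg (A + B) v = mdeg A v + mdeg B v"
  by (simp add: mdeg_def)
lemma mdeg_empty[simp]: "mdeg {#} v = 0"
  by (simp add: mdeg_def)
lemma mdeg_single: "mdeg {#e#} v = (if e = {v} then 2 else if v \<in> e then 1 else 0)"
  by (simp add: mdeg_def)
lemma mdeg_pair: "mdeg {#{a,b}#} v = of_bool (a = v) + of_bool (b = v)"
  by (auto simp: mdeg_single)
lemma mdeg_add_mset: "mdeg (add_mset e A) v = (if e = {v} then 2 else if v \<in> e then 1 else 0) + mdeg A v"
  by (simp add: mdeg_def)

lemma mdeg_ge_1_if_mem: "e \<in># E \<Longrightarrow> v \<in> e \<Longrightarrow> mdeg E v \<ge> 1"
proof -
  assume "e \<in># E" "v \<in> e"
  then obtain F where "E = add_mset e F" by (metis multi_member_split)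
  then show ?thesis using \<open>v \<in> e\<close> by (simp add: mdeg_add_mset mdeg_single)
qed

lemma mdeg_loop_ge_2: "{v} \<in># E \<Longrightarrow> mdeg E v \<ge> 2"
proof -
  assume "{v} \<in># E"
  then obtain F where "E = add_mset {v} F" by (metis multi_member_split)
  then show ?thesis by (simp add: mdeg_add_mset mdeg_single)
qed

lemma not_mem_if_mdeg_0: "mdeg E v = 0 \<Longrightarrow> e \<in># E \<Longrightarrow> v \<notin> e"
  using mdeg_ge_1_if_mem by fastforce

lemma mdeg_diff_single: "e \<in># E \<Longrightarrow> mdeg (E - {#e#}) v = mdeg E v - mdeg {#e#} v"
  by (metis add_diff_cancel_right' insert_DiffM2 mdeg_add)

lemma mdeg_sum: "finite P \<Longrightarrow> mdeg (\<Sum>B\<in>P. E B) v = (\<Sum>B\<in>P. mdeg (E B) v)"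
  by (induction P rule: finite_induct) auto

lemma sum_mdeg_eq_twice_size:
  assumes "\<forall>e\<in>#E. e \<subseteq> S \<and> (card e = 1 \<or> card e = 2)" "finite S"
  shows "(\<Sum>v\<in>S. mdeg E v) = 2 * size E"
  using assms(1)
proof (induction E)
  case empty then show ?case by simp
next
  case (add e E)
  have IH: "(\<Sum>v\<in>S. mdeg E v) = 2 * size E" using add by auto
  have e: "e \<subseteq> S" "card e = 1 \<or> card e = 2" using add by auto
  have "(\<Sum>v\<in>S. mdeg {#e#} v) = 2"
  proof (cases "card e = 1")
    case True
    then obtain a where a: "e = {a}" by (auto simp: card_Suc_eq)
    then have "a \<in> S" using e by auto
    then have "(\<Sum>v\<in>S. mdeg {#e#} v) = (\<Sum>v\<in>S. if v = a then 2 else 0)"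
      by (intro sum.cong) (auto simp: a mdeg_single)
    also have "\<dots> = 2" using \<open>a \<in> S\<close> assms(2) by simp
    finally show ?thesis .
  next
    case False
    then have "card e = 2" using e by auto
    then obtain a b where ab: "e = {a,b}" "a \<noteq> b" by (auto simp: card_Suc_eq numeral_2_eq_2)
    then have abS: "a \<in> S" "b \<in> S" using e by auto
    have "(\<Sum>v\<in>S. mdeg {#e#} v) = (\<Sum>v\<in>S. (if a = v then 1 else 0) + (if b = v then 1 else 0))"
      by (intro sum.cong) (auto simp: ab mdeg_pair)
    also have "\<dots> = 2" using abS assms(2) by (simp add: sum.distrib)
    finally show ?thesis .
  qed
  moreover have "mdeg (add_mset e E) v = mdeg {#e#} v + mdeg E v" for v
    by (simp add: mdeg_add_mset mdeg_single)
  ultimately show ?case using IH by (simp add: sum.distrib)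
qed

lemma mdeg_image_mset_pairs:
  "finite B \<Longrightarrow> mdeg (image_mset (\<lambda>b. {f b, g b}) (mset_set B)) v
    = (\<Sum>b\<in>B. of_bool (f b = v) + of_bool (g b = v))"
  by (induction B rule: finite_induct) (simp_all add: mdeg_add_mset mdeg_pair[unfolded mdeg_single])

lemma mdeg_eq_0_if_not_mem: "\<forall>e\<in>#M. v \<notin> e \<Longrightarrow> mdeg M v = 0"
  by (induction M) (auto simp: mdeg_add_mset)

lemma mdeg_neq_0_ex_edge: "mdeg E v \<noteq> 0 \<Longrightarrow> \<exists>e. e \<in># E \<and> v \<in> e"
  by (induction E) (auto simp: mdeg_add_mset split: if_splits)

lemma edge_eq_doubleton:
  assumes "l \<in> e" "card e = 1 \<or> card e = 2" "e \<noteq> {l}"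
  shows "\<exists>x. x \<noteq> l \<and> e = {l, x}"
proof -
  have "card e = 2"
    using assms by (metis card_1_singletonE singletonD)
  then obtain a b where "e = {a, b}" "a \<noteq> b"
    by (auto simp: card_Suc_eq numeral_2_eq_2)
  then show ?thesis using assms(1) by (metis insert_commute insertE singletonD)
qed

definition components_on :: "nat set \<Rightarrow> nat set multiset \<Rightarrow> nat set set" where
  "components_on S G = S // ((madj G)\<^sup>*)"

lemma madj_sym: "sym (madj G)"
  by (auto simp: madj_def sym_def)

lemma Image_rtrancl_eq_iff:
  assumes "sym R" shows "R\<^sup>*``{u} = R\<^sup>*``{v} \<longleftrightarrow> (u, v) \<in> R\<^sup>*"
proof
  assume "R\<^sup>*``{u} = R\<^sup>*``{v}"
  then show "(u, v) \<in> R\<^sup>*" by auto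
next
  assume uv: "(u, v) \<in> R\<^sup>*"
  then have "(v, u) \<in> R\<^sup>*" using sym_rtrancl[OF assms] by (meson symD)
  then show "R\<^sup>*``{u} = R\<^sup>*``{v}" using uv by (auto intro: rtrancl_trans)
qed

lemma quotient_eq_image: "S // R = (\<lambda>x. R``{x}) ` S"
  by (auto simp: quotient_def)

lemma card_image_eq_if_same_kernel:
  assumes "\<And>u v. u \<in> S \<Longrightarrow> v \<in> S \<Longrightarrow> f u = f v \<longleftrightarrow> g u = g v"
  shows "card (f ` S) = card (g ` S)"
proof (rule bij_betw_same_card)
  have h: "g (inv_into S f (f u)) = g u" if "u \<in> S" for u
    using assms that inv_into_into[of "f u" f S] f_inv_into_f[of "f u" f S] by blast
  show "bij_betw (\<lambda>y. g (inv_into S f y)) (f ` S) (g ` S)"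
  proof (rule bij_betw_imageI)
    show "inj_on (\<lambda>y. g (inv_into S f y)) (f ` S)"
      by (rule inj_onI) (use h assms in auto)
    show "(\<lambda>y. g (inv_into S f y)) ` f ` S = g ` S"
      using h by (simp add: image_image)
  qed
qed

lemma rtrancl_map:
  assumes "\<And>a b. (a, b) \<in> R \<Longrightarrow> (f a, f b) \<in> Q\<^sup>*" "(u, v) \<in> R\<^sup>*"
  shows "(f u, f v) \<in> Q\<^sup>*"
  using assms(2) by (induction rule: rtrancl_induct) (auto intro: rtrancl_trans assms(1))

lemma card_components_contract:
  assumes S: "finite S" "l \<in> S" "x \<in> S" "y \<in> S" "x \<noteq> l" "y \<noteq> l"
    and H: "\<forall>e\<in>#H. l \<notin> e"
  shows "card (components_on S (H + {#{l,x},{l,y}#})) = card (components_on (S - {l}) (H + {#{x,y}#}))"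
proof -
  define G where "G = H + {#{l,x},{l,y}#}"
  define G' where "G' = H + {#{x,y}#}"
  define f where "f v = (if v = l then x else v)" for v
  have G_G': "(f a, f b) \<in> (madj G')\<^sup>*" if ab: "(a,b) \<in> madj G" for a b
  proof -
    obtain e where e: "e \<in># G" "a \<in> e" "b \<in> e" using ab unfolding madj_def by blast
    show ?thesis
    proof (cases "e \<in># H")
      case True
      then have "a \<noteq> l" "b \<noteq> l" using H e by auto
      then show ?thesis using True e by (auto simp: madj_def G'_def f_def)
    next
      case False
      then have "e = {l,x} \<or> e = {l,y}" using e by (auto simp: G_def)
      moreover have "(x,y) \<in> madj G'" "(y,x) \<in> madj G'" "(x,x) \<in> madj G'" "(y,y) \<in> madj G'"
        by (auto simp: madj_def G'_def)
      ultimately show ?thesis using e by (auto simp: f_def)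
    qed
  qed
  have G'_G: "madj G' \<subseteq> (madj G)\<^sup>*"
  proof
    fix p assume "p \<in> madj G'"
    then obtain a b e where p: "p = (a, b)" "e \<in># G'" "a \<in> e" "b \<in> e" unfolding madj_def by blast
    have "(x,l) \<in> madj G" "(l,y) \<in> madj G" "(y,l) \<in> madj G" "(l,x) \<in> madj G"
      by (auto simp: madj_def G_def)
    then have "(x,y) \<in> (madj G)\<^sup>*" "(y,x) \<in> (madj G)\<^sup>*" by (meson rtrancl.simps)+
    then show "p \<in> (madj G)\<^sup>*" using p by (cases "e \<in># H") (auto simp: madj_def G_def G'_def)
  qed
  have u_fu: "(u, f u) \<in> (madj G)\<^sup>*" and fu_u: "(f u, u) \<in> (madj G)\<^sup>*" for u
    by (auto simp: f_def madj_def G_def)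
  have key: "(u,v) \<in> (madj G)\<^sup>* \<longleftrightarrow> (f u, f v) \<in> (madj G')\<^sup>*" for u v
  proof
    assume "(u,v) \<in> (madj G)\<^sup>*"
    then show "(f u, f v) \<in> (madj G')\<^sup>*" using rtrancl_map[of "madj G" f "madj G'"] G_G' by blast
  next
    assume "(f u, f v) \<in> (madj G')\<^sup>*"
    then have "(f u, f v) \<in> (madj G)\<^sup>*" using rtrancl_subset_rtrancl[OF G'_G] by blast
    then show "(u,v) \<in> (madj G)\<^sup>*" using u_fu fu_u by (meson rtrancl_trans)
  qed
  have fS: "f ` S = S - {l}" using S by (auto simp: f_def)
  have "card (components_on S G) = card ((\<lambda>u. (madj G)\<^sup>*``{u}) ` S)"
    by (simp add: components_on_def quotient_eq_image)
  also have "\<dots> = card ((\<lambda>u. (madj G')\<^sup>*``{f u}) ` S)"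
    by (rule card_image_eq_if_same_kernel) (simp add: Image_rtrancl_eq_iff[OF madj_sym] key)
  also have "(\<lambda>u. (madj G')\<^sup>*``{f u}) ` S = (\<lambda>w. (madj G')\<^sup>*``{w}) ` (f ` S)" by auto
  also have "card \<dots> = card (components_on (S - {l}) G')"
    by (simp add: components_on_def quotient_eq_image fS)
  finally show ?thesis by (simp add: G_def G'_def)
qed

lemma card_components_add_loop:
  assumes S: "finite S" "l \<in> S" and H: "\<forall>e\<in>#H. l \<notin> e"
  shows "card (components_on S (H + {#{l}#})) = card (components_on (S - {l}) H) + 1"
proof -
  have rt: "(madj (H + {#{l}#}))\<^sup>* = (madj H)\<^sup>*"
  proof -
    have "madj (H + {#{l}#}) = madj H \<union> {(l,l)}" by (auto simp: madj_def)
    moreover have "(madj H \<union> {(l,l)})\<^sup>* = (madj H)\<^sup>*"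
      by (intro equalityI rtrancl_subset_rtrancl rtrancl_mono) auto
    ultimately show ?thesis by simp
  qed
  have isolated: "v = l" if "(l,v) \<in> (madj H)\<^sup>*" for v
    using that by (induction rule: rtrancl_induct) (use H in \<open>auto simp: madj_def\<close>)
  then have cl: "(madj H)\<^sup>*``{l} = {l}" by auto
  have "S // (madj H)\<^sup>* = insert {l} ((S - {l}) // (madj H)\<^sup>*)"
    using S(2) cl by (auto simp: quotient_def)
  moreover have "{l} \<notin> (S - {l}) // (madj H)\<^sup>*"
    by (auto simp: quotient_def)
  moreover have "finite ((S - {l}) // (madj H)\<^sup>*)"
    using S(1) by (simp add: quotient_eq_image)
  ultimately show ?thesis using rt by (simp add: components_on_def)
qed

definition edge_closed :: "nat set multiset \<Rightarrow> nat set \<Rightarrow> bool" where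
  "edge_closed G Y \<longleftrightarrow> (\<forall>e\<in>#G. e \<subseteq> Y \<or> e \<inter> Y = {})"

lemma edge_closed_rtrancl:
  assumes "edge_closed G Y" "(u,v) \<in> (madj G)\<^sup>*"
  shows "u \<in> Y \<longleftrightarrow> v \<in> Y"
  using assms(2)
proof (induction rule: rtrancl_induct)
  case (step y z)
  then obtain e where "e \<in># G" "y \<in> e" "z \<in> e" unfolding madj_def by blast
  then show ?case using step assms(1) unfolding edge_closed_def by blast
qed simp

lemma components_onE:
  assumes "C \<in> components_on S G" obtains a where "a \<in> S" "C = (madj G)\<^sup>*``{a}"
  using assms unfolding components_on_def quotient_def by blast

lemma components_on_rtrancl:
  assumes "C \<in> components_on S G" "u \<in> C" "v \<in> C" shows "(u,v) \<in> (madj G)\<^sup>*"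
proof -
  obtain a where a: "C = (madj G)\<^sup>*``{a}" using components_onE[OF assms(1)] by blast
  have "(a,u) \<in> (madj G)\<^sup>*" "(a,v) \<in> (madj G)\<^sup>*" using a assms by auto
  then show ?thesis using sym_rtrancl[OF madj_sym] by (meson rtrancl_trans symD)
qed

lemma components_on_not_rtrancl:
  assumes "C1 \<in> components_on S G" "C2 \<in> components_on S G" "C1 \<noteq> C2" "u \<in> C1" "v \<in> C2"
  shows "(u,v) \<notin> (madj G)\<^sup>*"
proof
  assume uv: "(u,v) \<in> (madj G)\<^sup>*"
  obtain a where a: "C1 = (madj G)\<^sup>*``{a}" using components_onE[OF assms(1)] by blast
  obtain b where b: "C2 = (madj G)\<^sup>*``{b}" using components_onE[OF assms(2)] by blast
  have "(a,u) \<in> (madj G)\<^sup>*" "(b,v) \<in> (madj G)\<^sup>*" using a b assms by auto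
  then have "(a,b) \<in> (madj G)\<^sup>*" using uv sym_rtrancl[OF madj_sym]
    by (metis rtrancl_trans symD)
  then show False using assms(3) a b Image_rtrancl_eq_iff[OF madj_sym] by metis
qed

lemma components_on_closed:
  "C \<in> components_on S G \<Longrightarrow> u \<in> C \<Longrightarrow> (u,v) \<in> (madj G)\<^sup>* \<Longrightarrow> v \<in> C"
  by (metis components_onE rtrancl_trans ImageE ImageI singletonD singletonI)

lemma components_on_subset:
  assumes "C \<in> components_on S G" "\<forall>e\<in>#G. e \<subseteq> S" shows "C \<subseteq> S"
proof
  fix v assume "v \<in> C"
  moreover obtain a where "a \<in> S" "C = (madj G)\<^sup>*``{a}" using components_onE[OF assms(1)] by blast
  moreover have "edge_closed G S" using assms(2) unfolding edge_closed_def by blast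
  ultimately show "v \<in> S" using edge_closed_rtrancl by blast
qed

section \<open>Partitions and crossings\<close>

definition block_of :: "nat set set \<Rightarrow> nat \<Rightarrow> nat set" where
  "block_of P v = (THE B. B \<in> P \<and> v \<in> B)"

lemma partition_on_disjointD:
  "partition_on S P \<Longrightarrow> B \<in> P \<Longrightarrow> C \<in> P \<Longrightarrow> B \<noteq> C \<Longrightarrow> B \<inter> C = {}"
  unfolding partition_on_def by (meson disjnt_def pairwiseD)

lemma partition_on_subsetD: "partition_on S P \<Longrightarrow> B \<in> P \<Longrightarrow> B \<subseteq> S"
  unfolding partition_on_def by auto

lemma partition_on_nonemptyD: "partition_on S P \<Longrightarrow> B \<in> P \<Longrightarrow> B \<noteq> {}"
  unfolding partition_on_def by auto

lemma finite_block: "finite S \<Longrightarrow> partition_on S P \<Longrightarrow> B \<in> P \<Longrightarrow> finite B"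
  by (meson partition_on_subsetD finite_subset)

lemma block_of_eq: assumes "partition_on S P" "B \<in> P" "v \<in> B" shows "block_of P v = B"
  unfolding block_of_def
proof (rule the_equality)
  show "B \<in> P \<and> v \<in> B" using assms by auto
  show "C = B" if "C \<in> P \<and> v \<in> C" for C using that assms partition_on_disjointD by blast
qed

lemma block_of_in:
  assumes "partition_on S P" "v \<in> S" shows "block_of P v \<in> P" "v \<in> block_of P v"
proof -
  obtain B where "B \<in> P" "v \<in> B" using assms unfolding partition_on_def by auto
  then show "block_of P v \<in> P" "v \<in> block_of P v" using block_of_eq[OF assms(1)] by simp_all
qed

lemma card_partition_on_le:
  assumes "finite S" "partition_on S P" shows "card P \<le> card S"
proof -
  have fin: "\<And>B. B \<in> P \<Longrightarrow> finite B" using finite_block[OF assms] by blast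
  have "card P = (\<Sum>B\<in>P. 1)" by simp
  also have "\<dots> \<le> (\<Sum>B\<in>P. card B)"
    using fin partition_on_nonemptyD[OF assms(2)] by (intro sum_mono) (simp add: Suc_le_eq card_gt_0_iff)
  also have "\<dots> = card S"
    using card_Union_disjoint[OF partition_onD2[OF assms(2)] fin] partition_onD1[OF assms(2)] by simp
  finally show ?thesis .
qed

lemma card_partition_on_pos:
  "finite S \<Longrightarrow> S \<noteq> {} \<Longrightarrow> partition_on S P \<Longrightarrow> card P \<ge> 1"
  using finite_elements[of S P] partition_onD1[of S P] by (auto simp: Suc_le_eq card_gt_0_iff)

lemma sum_of_bool_mem_block:
  fixes S :: "nat set"
  assumes "partition_on S P" "finite P" "v \<in> S"
  shows "(\<Sum>B\<in>P. of_bool (v \<in> B) :: nat) = 1"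
proof -
  have eq: "v \<in> B \<longleftrightarrow> B = block_of P v" if "B \<in> P" for B
    using block_of_eq[OF assms(1) that] block_of_in[OF assms(1,3)] by blast
  have "(\<Sum>B\<in>P. of_bool (v \<in> B) :: nat) = (\<Sum>B\<in>P. if B = block_of P v then 1 else 0)"
    by (rule sum.cong) (simp_all add: eq)
  also have "\<dots> = 1" using assms(2) block_of_in(1)[OF assms(1,3)] by simp
  finally show ?thesis .
qed

lemma crossingI:
  assumes "X \<in> Q" "Y \<in> Q" "X \<noteq> Y" "i < j" "j < i'" "i' < j'"
   "i \<in> X" "i' \<in> X" "j \<in> Y" "j' \<in> Y" shows "crossing Q"
  unfolding crossing_def
proof (rule bexI[OF _ assms(1)], rule bexI[OF _ assms(2)], rule conjI[OF assms(3)])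
  show "\<exists>i j i' j'. i < j \<and> j < i' \<and> i' < j' \<and> i \<in> X \<and> i' \<in> X \<and> j \<in> Y \<and> j' \<in> Y"
    by (rule exI[of _ i], rule exI[of _ j], rule exI[of _ i'], rule exI[of _ j']) (simp add: assms)
qed

lemma crossingE:
  assumes "crossing Q"
  obtains X Y i j i' j' where "X \<in> Q" "Y \<in> Q" "X \<noteq> Y" "i < j" "j < i'" "i' < j'"
    "i \<in> X" "i' \<in> X" "j \<in> Y" "j' \<in> Y"
  using assms unfolding crossing_def by blast

lemma crossing_map:
  assumes "crossing Q" "\<And>X. X \<in> Q \<Longrightarrow> f X \<in> R \<and> X \<subseteq> f X" "inj_on f Q"
  shows "crossing R"
proof -
  obtain X Y i j i' j' where w: "X \<in> Q" "Y \<in> Q" "X \<noteq> Y" "i < j" "j < i'" "i' < j'"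
    "i \<in> X" "i' \<in> X" "j \<in> Y" "j' \<in> Y" using crossingE[OF assms(1)] by blast
  have "f X \<noteq> f Y" using assms(3) w(1-3) by (meson inj_onD)
  then show ?thesis using crossingI[of "f X" R "f Y" i j i' j'] w assms(2)[of X] assms(2)[of Y] by blast
qed

lemma not_crossing_subset:
  assumes "\<not> crossing P" "Q \<subseteq> P" shows "\<not> crossing Q"
  using assms crossing_map[of Q id P] by auto

lemma not_crossing_shrink_block:
  assumes "\<not> crossing P" "partition_on S P" "B \<in> P" "B - {l} \<noteq> {}"
  shows "\<not> crossing (insert (B - {l}) (P - {B}))"
proof
  assume c: "crossing (insert (B - {l}) (P - {B}))"
  define f where "f Z = (if Z = B - {l} then B else Z)" for Z
  have inj: "inj_on f (insert (B - {l}) (P - {B}))"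
  proof (rule inj_onI)
    fix X Y assume X: "X \<in> insert (B - {l}) (P - {B})" and Y: "Y \<in> insert (B - {l}) (P - {B})" and e: "f X = f Y"
    have nb: "Z \<noteq> B - {l}" if "Z \<in> P - {B}" for Z
    proof
      assume "Z = B - {l}"
      then have "Z \<inter> B = {}" "Z \<subseteq> B" using partition_on_disjointD[OF assms(2) _ assms(3)] that by auto
      then show False using \<open>Z = B - {l}\<close> assms(4) by auto
    qed
    show "X = Y" using X Y e nb by (auto simp: f_def split: if_splits)
  qed
  have "crossing P" by (rule crossing_map[OF c _ inj]) (use assms(3) in \<open>auto simp: f_def\<close>)
  then show False using assms(1) by simp
qed

lemma not_crossing_inside_or_outside:
  assumes "\<not> crossing P" "partition_on S P" "B \<in> P" "C \<in> P" "B \<noteq> C" "t \<in> B" "t' \<in> B" "t < t'"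
  shows "(\<forall>x\<in>C. t < x \<and> x < t') \<or> (\<forall>x\<in>C. x < t \<or> t' < x)"
proof -
  have ne: "x \<noteq> t" "x \<noteq> t'" if "x \<in> C" for x
    using partition_on_disjointD[OF assms(2-5)] that assms(6,7) by auto
  have False if "x \<in> C" "y \<in> C" "t < x" "x < t'" "y < t \<or> t' < y" for x y
    using that assms crossingI[OF assms(3,4,5), of t x t' y] crossingI[OF assms(4,3) assms(5)[symmetric], of y t x t']
    by auto
  then show ?thesis using ne by (meson linorder_neqE_nat)
qed

lemma not_crossing_singleton_block:
  assumes "finite S" "partition_on S P" "\<not> crossing P" "S \<noteq> {}"
    and no_repeat: "\<forall>v\<in>S. block_of P (cyc_prev S v) \<noteq> block_of P v"
  shows "\<exists>l. {l} \<in> P"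
proof -
  obtain B0 where "B0 \<in> P" using assms(2,4) unfolding partition_on_def by auto
  then obtain B where B: "B \<in> P" "\<And>C. C \<in> P \<Longrightarrow> Max B - Min B \<le> Max C - Min C"
    using ex_has_least_nat[of "\<lambda>C. C \<in> P" B0 "\<lambda>C. Max C - Min C"] by blast
  have fB: "finite B" "B \<noteq> {}" "B \<subseteq> S"
    using finite_block[OF assms(1,2) B(1)] partition_on_nonemptyD[OF assms(2) B(1)]
      partition_on_subsetD[OF assms(2) B(1)] by auto
  define b where "b = Min B"
  define m where "m = Max B"
  have bm: "b \<in> B" "m \<in> B" "\<forall>x\<in>B. b \<le> x \<and> x \<le> m" using fB by (simp_all add: b_def m_def)
  show ?thesis
  proof (cases "b = m")
    case True
    then have "B = {b}" using bm by force
    then show ?thesis using B(1) by blast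
  next
    case False
    then have "b < m" using bm by (meson le_neq_implies_less)
    define c where "c = cyc_next S b"
    have "\<exists>x\<in>S. b < x" using \<open>b < m\<close> bm(2) fB(3) by blast
    then have c: "c \<in> S" "b < c" "c \<le> m"
      using cyc_next_char[OF assms(1,4), of b] \<open>b < m\<close> bm(2) fB(3) by (auto simp: c_def)
    have "cyc_prev S c = b" using cyc_prev_next[OF assms(1)] bm fB(3) by (auto simp: c_def)
    then have "c \<notin> B" using no_repeat c(1) block_of_eq[OF assms(2) B(1)] bm(1) by metis
    define C where "C = block_of P c"
    have C: "C \<in> P" "c \<in> C" "C \<noteq> B" using block_of_in[OF assms(2) c(1)] \<open>c \<notin> B\<close> by (auto simp: C_def)
    have "c < m" using c(3) \<open>c \<notin> B\<close> bm(2) by (metis le_neq_implies_less)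
    then have inside: "\<forall>x\<in>C. b < x \<and> x < m"
      using not_crossing_inside_or_outside[OF assms(3,2) B(1) C(1) C(3)[symmetric] bm(1,2) \<open>b < m\<close>] C(2) c(2)
      by auto
    have "finite C" "C \<noteq> {}" using finite_block[OF assms(1,2) C(1)] C(2) by auto
    then have "b < Min C" "Max C < m" using inside by simp_all
    then have "Max C - Min C < m - b" using \<open>b < m\<close> by linarith
    then show ?thesis using B(2)[OF C(1)] by (simp add: b_def m_def)
  qed
qed

definition change_points :: "nat set \<Rightarrow> nat set set \<Rightarrow> nat set" where
  "change_points S P = {v\<in>S. block_of P (cyc_prev S v) \<noteq> block_of P v}"

lemma change_point_between:
  assumes "finite S" "partition_on S P" "a \<in> S" "b \<in> S" "a < b" "block_of P a \<noteq> block_of P b"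
  shows "\<exists>v\<in>change_points S P. a < v \<and> v \<le> b"
proof -
  define W where "W = {w\<in>S. a < w \<and> w \<le> b \<and> block_of P w \<noteq> block_of P a}"
  have fW: "finite W" using assms(1) by (simp add: W_def)
  have "b \<in> W" using assms by (auto simp: W_def)
  define v where "v = Min W"
  have "v \<in> W" using Min_in[OF fW] \<open>b \<in> W\<close> unfolding v_def by blast
  then have v: "v \<in> S" "a < v" "v \<le> b" "block_of P v \<noteq> block_of P a" by (simp_all add: W_def)
  have v_min: "\<forall>w\<in>W. v \<le> w" using Min_le[OF fW] by (simp add: v_def)
  have "S \<noteq> {}" "\<exists>c\<in>S. c < v" using assms(3) v by auto
  then have "cyc_prev S v < v" "a \<le> cyc_prev S v" "cyc_prev S v \<in> S"
    using cyc_prev_char[OF assms(1), of v] assms(3) v(2) by auto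
  moreover have "cyc_prev S v \<notin> W" using v_min \<open>cyc_prev S v < v\<close> by (meson leD)
  ultimately have "block_of P (cyc_prev S v) = block_of P a"
    using v by (cases "cyc_prev S v = a") (auto simp: W_def)
  then show ?thesis using v by (auto simp: change_points_def)
qed

lemma change_point_wrap:
  assumes "finite S" "partition_on S P" "a \<in> S" "b \<in> S" "block_of P a \<noteq> block_of P b"
  shows "\<exists>v\<in>change_points S P. v \<le> a \<or> b < v"
proof -
  have Sne: "S \<noteq> {}" using assms(3) by auto
  define mx where "mx = Max S"
  define mn where "mn = Min S"
  have mx: "mx \<in> S" "\<forall>x\<in>S. x \<le> mx" using Max_in[OF assms(1) Sne] Max_ge[OF assms(1)] by (auto simp: mx_def)
  have mn: "mn \<in> S" "\<forall>x\<in>S. mn \<le> x" using Min_in[OF assms(1) Sne] Min_le[OF assms(1)] by (auto simp: mn_def)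
  consider "block_of P mx \<noteq> block_of P b" | "block_of P mn \<noteq> block_of P mx"
    | "block_of P mn \<noteq> block_of P a" using assms(5) by metis
  then show ?thesis
  proof cases
    case 1
    then have "b < mx" using mx assms(4) by (metis le_neq_implies_less)
    then show ?thesis using change_point_between[OF assms(1,2,4) mx(1)] 1 by blast
  next
    case 2
    have "cyc_prev S mn = mx" by (rule cyc_prev_eqI[OF assms(1) mx(1)]) (use mn mx in auto)
    then have "mn \<in> change_points S P" using 2 mn by (auto simp: change_points_def)
    then show ?thesis using mn assms(3) by blast
  next
    case 3
    then have "mn < a" using mn assms(3) by (metis le_neq_implies_less)
    then show ?thesis using change_point_between[OF assms(1,2) mn(1) assms(3)] 3 by blast
  qed
qed

text \<open>Each of the four arcs of the cycle cut out by a crossing i < j < i' < j' contains a change point.\<close>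
lemma card_change_points_ge_4:
  assumes "finite S" "partition_on S P" "crossing P"
  shows "4 \<le> card (change_points S P)"
proof -
  obtain X Y i j i' j' where w: "X \<in> P" "Y \<in> P" "X \<noteq> Y" "i < j" "j < i'" "i' < j'"
    "i \<in> X" "i' \<in> X" "j \<in> Y" "j' \<in> Y" using crossingE[OF assms(3)] by blast
  define T where "T = change_points S P"
  have iS: "i \<in> S" "j \<in> S" "i' \<in> S" "j' \<in> S" using w partition_on_subsetD[OF assms(2)] by blast+
  have bX: "block_of P i = X" "block_of P i' = X" using block_of_eq[OF assms(2) w(1)] w by auto
  have bY: "block_of P j = Y" "block_of P j' = Y" using block_of_eq[OF assms(2) w(2)] w by auto
  obtain v1 where v1: "v1 \<in> T" "i < v1" "v1 \<le> j"
    using change_point_between[OF assms(1,2) iS(1,2) w(4)] bX bY w(3) by (auto simp: T_def)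
  obtain v2 where v2: "v2 \<in> T" "j < v2" "v2 \<le> i'"
    using change_point_between[OF assms(1,2) iS(2,3) w(5)] bX bY w(3) by (auto simp: T_def)
  obtain v3 where v3: "v3 \<in> T" "i' < v3" "v3 \<le> j'"
    using change_point_between[OF assms(1,2) iS(3,4) w(6)] bX bY w(3) by (auto simp: T_def)
  obtain v4 where v4: "v4 \<in> T" "v4 \<le> i \<or> j' < v4"
    using change_point_wrap[OF assms(1,2) iS(1,4)] bX bY w(3,4,5,6) by (auto simp: T_def)
  have "{v1, v2, v3, v4} \<subseteq> T" using v1 v2 v3 v4 by auto
  moreover have "card {v1, v2, v3, v4} = 4" using v1 v2 v3 v4 w by auto
  moreover have "finite T" using assms(1) by (simp add: T_def change_points_def)
  ultimately show ?thesis unfolding T_def[symmetric] by (metis card_mono)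
qed

section \<open>Deleting a vertex\<close>

text \<open>E assigns each block its own graph; on S = {1..k} the degree condition says that the degree of
  v in the graph of B is m_pi(v) on the closed block of B and 0 outside it.\<close>
definition consistent_on :: "nat set \<Rightarrow> nat set set \<Rightarrow> (nat set \<Rightarrow> nat set multiset) \<Rightarrow> bool" where
  "consistent_on S P E \<longleftrightarrow> (\<forall>B\<in>P. \<forall>e\<in>#E B. e \<subseteq> S \<and> (card e = 1 \<or> card e = 2)) \<and>
     (\<forall>B\<in>P. \<forall>v\<in>S. mdeg (E B) v = of_bool (v \<in> B) + of_bool (cyc_prev S v \<in> B))"

definition union_graph :: "nat set set \<Rightarrow> (nat set \<Rightarrow> nat set multiset) \<Rightarrow> nat set multiset" where
  "union_graph P E = (\<Sum>B\<in>P. E B)"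

lemma mem_union_graph: "finite P \<Longrightarrow> B \<in> P \<Longrightarrow> e \<in># E B \<Longrightarrow> e \<in># union_graph P E"
  unfolding union_graph_def by (metis sum.remove union_iff)

lemma mem_union_graphE: "finite P \<Longrightarrow> e \<in># union_graph P E \<Longrightarrow> \<exists>B\<in>P. e \<in># E B"
  unfolding union_graph_def by (induction P rule: finite_induct) auto

definition merged_block :: "nat set \<Rightarrow> nat set set \<Rightarrow> nat \<Rightarrow> nat set" where
  "merged_block S P l = (block_of P (cyc_prev S l) \<union> block_of P l) - {l}"

definition merged_partition :: "nat set \<Rightarrow> nat set set \<Rightarrow> nat \<Rightarrow> nat set set" where
  "merged_partition S P l =
     insert (merged_block S P l) (P - {block_of P (cyc_prev S l), block_of P l})"

text \<open>Deleting l merges the blocks A of its predecessor and B of l into D = (A \<union> B) - {l}. The two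
  edge ends at l lie in the graphs of A and B and form a loop at l or a path x - l - y, which is
  replaced by the edge x - y.\<close>
locale vertex_deletion =
  fixes S :: "nat set" and P :: "nat set set" and E :: "nat set \<Rightarrow> nat set multiset" and l :: nat
  assumes finS: "finite S" and cardS: "card S \<ge> 2" and partS: "partition_on S P"
    and consE: "consistent_on S P E" and lS: "l \<in> S"
begin

abbreviation "p \<equiv> cyc_prev S l"
abbreviation "A \<equiv> block_of P p"
abbreviation "B \<equiv> block_of P l"
abbreviation "D \<equiv> merged_block S P l"
abbreviation "P' \<equiv> merged_partition S P l"
abbreviation "F \<equiv> if A = B then E B else E A + E B"

lemma prev_in_S: "p \<in> S" using cyc_prev_in[OF finS] lS by blast
lemma prev_neq: "p \<noteq> l" using cyc_prev_neq[OF finS lS cardS] .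
lemma A_in_P: "A \<in> P" and prev_in_A: "p \<in> A" using block_of_in[OF partS prev_in_S] by auto
lemma B_in_P: "B \<in> P" and l_in_B: "l \<in> B" using block_of_in[OF partS lS] by auto
lemma A_B_disjoint: "A \<noteq> B \<Longrightarrow> A \<inter> B = {}" using partition_on_disjointD[OF partS A_in_P B_in_P] .
lemma prev_in_D: "p \<in> D" using prev_in_A prev_neq by (auto simp: merged_block_def)
lemma D_subset: "D \<subseteq> S - {l}"
  using partition_on_subsetD[OF partS A_in_P] partition_on_subsetD[OF partS B_in_P]
  by (auto simp: merged_block_def)
lemma finite_P: "finite P" using finite_elements[OF finS partS] .

lemma other_disjoint: "C \<in> P \<Longrightarrow> C \<noteq> A \<Longrightarrow> C \<noteq> B \<Longrightarrow> C \<inter> (A \<union> B) = {}"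
  using partition_on_disjointD[OF partS _ A_in_P] partition_on_disjointD[OF partS _ B_in_P] by auto

lemma D_notin: "D \<notin> P - {A, B}"
  using other_disjoint prev_in_D prev_in_A by (auto simp: merged_block_def)

lemma partition_P': "partition_on (S - {l}) P'"
proof (rule partition_onI)
  show "\<Union>P' = S - {l}"
  proof
    show "\<Union>P' \<subseteq> S - {l}"
      using D_subset partition_on_subsetD[OF partS] other_disjoint l_in_B
      by (fastforce simp: merged_partition_def)
    show "S - {l} \<subseteq> \<Union>P'"
    proof
      fix v assume v: "v \<in> S - {l}"
      then obtain C where "C \<in> P" "v \<in> C" using partS unfolding partition_on_def by auto
      then show "v \<in> \<Union>P'" using v
        by (cases "C = A \<or> C = B") (auto simp: merged_partition_def merged_block_def)
    qed
  qed
  show "disjnt X Y" if "X \<in> P'" "Y \<in> P'" "X \<noteq> Y" for X Y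
  proof -
    have "disjnt X Y" if "X \<in> P - {A,B}" "Y \<in> P - {A,B}" "X \<noteq> Y" for X Y
      using partition_on_disjointD[OF partS] that by (auto simp: disjnt_def)
    moreover have "disjnt X D" if "X \<in> P - {A,B}" for X
      using other_disjoint that by (auto simp: disjnt_def merged_block_def)
    moreover have "X = D \<or> X \<in> P - {A,B}" "Y = D \<or> Y \<in> P - {A,B}"
      using that(1,2) by (auto simp: merged_partition_def)
    ultimately show ?thesis using that(3) by (metis disjnt_sym)
  qed
  show "{} \<notin> P'"
    using prev_in_D partition_on_nonemptyD[OF partS] by (auto simp: merged_partition_def)
qed

lemma card_P': "card P' = (if A = B then card P else card P - 1)"
proof -
  have "card P' = card (P - {A,B}) + 1"
    using D_notin finite_P by (simp add: merged_partition_def)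
  moreover have "card (P - {A,B}) = card P - card {A,B}"
    using A_in_P B_in_P finite_P by (simp add: card_Diff_subset)
  moreover have "card P \<ge> card {A,B}" using A_in_P B_in_P finite_P by (simp add: card_mono)
  ultimately show ?thesis by (cases "A = B") simp_all
qed

lemma mdeg_E: "C \<in> P \<Longrightarrow> v \<in> S \<Longrightarrow> mdeg (E C) v = of_bool (v \<in> C) + of_bool (cyc_prev S v \<in> C)"
  using consE unfolding consistent_on_def by auto

lemma edge_E: "C \<in> P \<Longrightarrow> e \<in># E C \<Longrightarrow> e \<subseteq> S \<and> (card e = 1 \<or> card e = 2)"
  using consE unfolding consistent_on_def by auto

lemma edge_F: "e \<in># F \<Longrightarrow> e \<subseteq> S \<and> (card e = 1 \<or> card e = 2)"
  using edge_E A_in_P B_in_P by (auto split: if_splits)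

lemma cyc_prev_delete: "v \<in> S - {l} \<Longrightarrow> cyc_prev (S - {l}) v = (if cyc_prev S v = l then p else cyc_prev S v)"
  using cyc_prev_remove[OF finS lS _ _ cardS] by auto

lemma mdeg_other_at_l: "C \<in> P \<Longrightarrow> C \<noteq> A \<Longrightarrow> C \<noteq> B \<Longrightarrow> mdeg (E C) l = 0"
  using mdeg_E[OF _ lS] other_disjoint l_in_B prev_in_A by auto

lemma mdeg_other:
  assumes "C \<in> P" "C \<noteq> A" "C \<noteq> B" "v \<in> S - {l}"
  shows "mdeg (E C) v = of_bool (v \<in> C) + of_bool (cyc_prev (S - {l}) v \<in> C)"
  using mdeg_E[of C v] assms cyc_prev_delete[OF assms(4)] other_disjoint[OF assms(1-3)] l_in_B prev_in_A
  by auto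

lemma mdeg_F:
  assumes v: "v \<in> S - {l}"
  shows "mdeg F v = of_bool (v \<in> D) + of_bool (cyc_prev (S - {l}) v \<in> D)"
proof -
  have vS: "v \<in> S" using v by auto
  show ?thesis
  proof (cases "A = B")
    case True
    then show ?thesis
      using mdeg_E[OF B_in_P vS] cyc_prev_delete[OF v] prev_in_A l_in_B prev_neq v
      by (auto simp: merged_block_def)
  next
    case False
    then show ?thesis
      using mdeg_E[OF B_in_P vS] mdeg_E[OF A_in_P vS] cyc_prev_delete[OF v] l_in_B prev_in_A prev_neq v
        A_B_disjoint[OF False]
      by (auto simp: merged_block_def)
  qed
qed

lemma mdeg_F_at_l: "mdeg F l = 2"
  using mdeg_E[OF B_in_P lS] mdeg_E[OF A_in_P lS] l_in_B prev_in_A A_B_disjoint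
  by (cases "A = B") auto

lemma union_graph_split: "union_graph P E = union_graph (P - {A,B}) E + F"
proof -
  have "union_graph P E = (\<Sum>C\<in>P - {A,B}. E C) + (\<Sum>C\<in>{A,B}. E C)"
    unfolding union_graph_def using finite_P A_in_P B_in_P
    by (metis add.commute empty_subsetI insert_subset sum.subset_diff)
  then show ?thesis by (cases "A = B") (auto simp: union_graph_def)
qed

lemma union_graph_P': "union_graph P' (E(D := M)) = union_graph (P - {A,B}) E + M"
proof -
  have "union_graph P' (E(D := M)) = M + (\<Sum>C\<in>P - {A,B}. (E(D := M)) C)"
    unfolding union_graph_def merged_partition_def using D_notin finite_P by simp
  also have "(\<Sum>C\<in>P - {A,B}. (E(D := M)) C) = union_graph (P - {A,B}) E"
    unfolding union_graph_def using D_notin by (intro sum.cong) auto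
  finally show ?thesis by (simp add: add.commute fun_upd_def)
qed

lemma mdeg_rest_at_l: "mdeg (union_graph (P - {A,B}) E) l = 0"
  unfolding union_graph_def using finite_P mdeg_other_at_l by (simp add: mdeg_sum)

lemma consistent_on_P':
  assumes edges: "\<forall>e\<in>#M. e \<subseteq> S - {l} \<and> (card e = 1 \<or> card e = 2)"
    and degrees: "\<forall>v\<in>S - {l}. mdeg M v = mdeg F v"
  shows "consistent_on (S - {l}) P' (E(D := M))"
  unfolding consistent_on_def
proof (rule conjI; intro ballI)
  fix X e assume X: "X \<in> P'" and e: "e \<in># (E(D := M)) X"
  from X have "X = D \<or> X \<in> P - {A,B}" by (auto simp: merged_partition_def)
  then show "e \<subseteq> S - {l} \<and> (card e = 1 \<or> card e = 2)"
  proof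
    assume "X = D"
    then show ?thesis using edges e by simp
  next
    assume XP: "X \<in> P - {A,B}"
    then have "e \<in># E X" using e D_notin by (auto split: if_splits)
    then show ?thesis using XP edge_E not_mem_if_mdeg_0[OF mdeg_other_at_l] by blast
  qed
next
  fix X v assume X: "X \<in> P'" and v: "v \<in> S - {l}"
  from X have "X = D \<or> X \<in> P - {A,B}" by (auto simp: merged_partition_def)
  then show "mdeg ((E(D := M)) X) v = of_bool (v \<in> X) + of_bool (cyc_prev (S - {l}) v \<in> X)"
  proof
    assume "X = D"
    then show ?thesis using degrees mdeg_F[OF v] v by simp
  next
    assume XP: "X \<in> P - {A,B}"
    then have "X \<noteq> D" using D_notin by blast
    then show ?thesis using XP mdeg_other[of X v] v by simp
  qed
qed

lemma delete_loop:
  assumes loop: "{l} \<in># E B"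
  defines "M \<equiv> E B - {#{l}#}"
  shows "A = B" "consistent_on (S - {l}) P' (E(D := M))"
    "card (components_on S (union_graph P E)) = card (components_on (S - {l}) (union_graph P' (E(D := M)))) + 1"
proof -
  have "mdeg (E B) l \<ge> 2" using mdeg_loop_ge_2[OF loop] .
  then have "p \<in> B" using mdeg_E[OF B_in_P lS] by (auto simp: of_bool_def split: if_splits)
  then show AB: "A = B" using block_of_eq[OF partS B_in_P] by simp
  have M_l: "mdeg M l = 0"
    using mdeg_E[OF B_in_P lS] l_in_B AB prev_in_A mdeg_diff_single[OF loop] by (simp add: M_def mdeg_single)
  show "consistent_on (S - {l}) P' (E(D := M))"
  proof (rule consistent_on_P')
    show "\<forall>e\<in>#M. e \<subseteq> S - {l} \<and> (card e = 1 \<or> card e = 2)"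
      using edge_E[OF B_in_P] not_mem_if_mdeg_0[OF M_l] by (auto simp: M_def dest: in_diffD)
    show "\<forall>v\<in>S - {l}. mdeg M v = mdeg F v"
      using mdeg_diff_single[OF loop] AB by (simp add: M_def mdeg_single)
  qed
  have "union_graph P E = union_graph P' (E(D := M)) + {#{l}#}"
    using union_graph_split union_graph_P'[of M] loop AB by (simp add: M_def)
  moreover have "\<forall>e\<in>#union_graph P' (E(D := M)). l \<notin> e"
    using not_mem_if_mdeg_0[of "union_graph P' (E(D := M))" l] union_graph_P'[of M] M_l mdeg_rest_at_l
    by simp
  ultimately show "card (components_on S (union_graph P E))
      = card (components_on (S - {l}) (union_graph P' (E(D := M)))) + 1"
    using card_components_add_loop[OF finS lS] by simp
qed

lemma contract_path:
  assumes x: "{l,x} \<in># E B" "x \<noteq> l" and y: "{l,y} \<in># (if A = B then E B - {#{l,x}#} else E A)" "y \<noteq> l"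
  defines "M \<equiv> F - {#{l,x}, {l,y}#} + {#{x,y}#}"
  shows "consistent_on (S - {l}) P' (E(D := M))"
    "card (components_on S (union_graph P E)) = card (components_on (S - {l}) (union_graph P' (E(D := M))))"
proof -
  obtain R where R: "F = R + {#{l,x}, {l,y}#}"
  proof (cases "A = B")
    case True
    have "{l,y} \<in># E B - {#{l,x}#}" using y(1) True by simp
    then obtain R where R: "E B - {#{l,x}#} = add_mset {l,y} R" using multi_member_split by metis
    have "E B = add_mset {l,x} (E B - {#{l,x}#})" using x(1) by simp
    then have "E B = R + {#{l,x}, {l,y}#}" unfolding R by (simp add: add_mset_commute)
    then show ?thesis using that[of R] True by simp
  next
    case False
    have "{l,y} \<in># E A" using y(1) False by simp
    then obtain R1 where "E A = add_mset {l,y} R1" using multi_member_split by metis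
    moreover obtain R2 where "E B = add_mset {l,x} R2" using x(1) multi_member_split by metis
    ultimately show ?thesis using that[of "R1 + R2"] False by (simp add: add_mset_commute)
  qed
  have M: "M = R + {#{x,y}#}" unfolding M_def R by simp
  have xyS: "x \<in> S" "y \<in> S" using edge_F[of "{l,x}"] edge_F[of "{l,y}"] unfolding R by simp_all
  have mdeg_R_at_l: "mdeg R l = 0"
    using mdeg_F_at_l x(2) y(2) unfolding R by (simp add: mdeg_add_mset mdeg_pair)
  show "consistent_on (S - {l}) P' (E(D := M))"
  proof (rule consistent_on_P')
    have "e \<subseteq> S - {l} \<and> (card e = 1 \<or> card e = 2)" if "e \<in># R" for e
      using edge_F[of e] not_mem_if_mdeg_0[OF mdeg_R_at_l that] that unfolding R by auto
    moreover have "card {x,y} = 1 \<or> card {x,y} = 2" by (cases "x = y") auto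
    ultimately show "\<forall>e\<in>#M. e \<subseteq> S - {l} \<and> (card e = 1 \<or> card e = 2)"
      using xyS x(2) y(2) unfolding M by auto
    show "\<forall>v\<in>S - {l}. mdeg M v = mdeg F v"
      unfolding M R by (auto simp: mdeg_add_mset mdeg_pair)
  qed
  define H where "H = union_graph (P - {A,B}) E + R"
  have "union_graph P E = H + {#{l,x},{l,y}#}"
    unfolding union_graph_split R by (simp add: H_def add.assoc)
  moreover have "union_graph P' (E(D := M)) = H + {#{x,y}#}"
    unfolding union_graph_P' M by (simp add: H_def add.assoc)
  moreover have "\<forall>e\<in>#H. l \<notin> e"
    using not_mem_if_mdeg_0[of H l] mdeg_R_at_l mdeg_rest_at_l by (simp add: H_def)
  ultimately show "card (components_on S (union_graph P E))
      = card (components_on (S - {l}) (union_graph P' (E(D := M))))"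
    using card_components_contract[OF finS lS xyS x(2) y(2)] by simp
qed

lemma path_at_l:
  assumes "{l} \<notin># E B"
  obtains x y where "{l,x} \<in># E B" "x \<noteq> l" "{l,y} \<in># (if A = B then E B - {#{l,x}#} else E A)" "y \<noteq> l"
proof -
  have "mdeg (E B) l \<ge> 1" using mdeg_E[OF B_in_P lS] l_in_B by simp
  then obtain e1 where e1: "e1 \<in># E B" "l \<in> e1" using mdeg_neq_0_ex_edge[of "E B" l] by fastforce
  have "e1 \<noteq> {l}" using e1 assms by auto
  then obtain x where x: "x \<noteq> l" "e1 = {l,x}"
    using edge_eq_doubleton[OF e1(2)] edge_E[OF B_in_P e1(1)] by blast
  let ?R = "if A = B then E B - {#{l,x}#} else E A"
  have "mdeg ?R l = 1"
  proof (cases "A = B")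
    case True
    then show ?thesis using mdeg_E[OF B_in_P lS] l_in_B prev_in_A mdeg_diff_single[OF e1(1)] x
      by (simp add: mdeg_pair)
  next
    case False
    then show ?thesis using mdeg_E[OF A_in_P lS] l_in_B prev_in_A A_B_disjoint by auto
  qed
  then obtain e2 where e2: "e2 \<in># ?R" "l \<in> e2" using mdeg_neq_0_ex_edge[of ?R l] by auto
  have "e2 \<in># E A \<or> e2 \<in># E B" using e2(1) by (auto split: if_splits dest: in_diffD)
  moreover have "e2 \<noteq> {l}" using mdeg_loop_ge_2[of l ?R] e2 \<open>mdeg ?R l = 1\<close> by auto
  ultimately obtain y where "y \<noteq> l" "e2 = {l,y}"
    using edge_eq_doubleton[OF e2(2)] edge_E[OF A_in_P] edge_E[OF B_in_P] by blast
  then show ?thesis using that x e1 e2 by blast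
qed

end

section \<open>The canonical graph\<close>

definition canon_graph :: "nat set \<Rightarrow> nat set \<Rightarrow> nat set multiset" where
  "canon_graph S B = image_mset (\<lambda>b. {cyc_next S b, cyc_next B b}) (mset_set B)"

lemma sum_of_bool_cyc_next_eq:
  assumes "finite X" "B \<subseteq> X" "v \<in> X"
  shows "(\<Sum>b\<in>B. of_bool (cyc_next X b = v) :: nat) = of_bool (cyc_prev X v \<in> B)"
proof -
  have "(\<Sum>b\<in>B. of_bool (cyc_next X b = v) :: nat) = (\<Sum>b\<in>B. if b = cyc_prev X v then 1 else 0)"
    using cyc_next_eq_iff[OF assms(1) _ assms(3)] assms(2) by (intro sum.cong) auto
  also have "\<dots> = of_bool (cyc_prev X v \<in> B)"
    using finite_subset[OF assms(2,1)] by simp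
  finally show ?thesis .
qed

lemma mdeg_canon_graph:
  assumes S: "finite S" "B \<subseteq> S" "B \<noteq> {}" "v \<in> S"
  shows "mdeg (canon_graph S B) v = of_bool (v \<in> B) + of_bool (cyc_prev S v \<in> B)"
proof -
  have fB: "finite B" using S finite_subset by blast
  have "(\<Sum>b\<in>B. of_bool (cyc_next B b = v) :: nat) = of_bool (v \<in> B)"
  proof (cases "v \<in> B")
    case True
    then show ?thesis using sum_of_bool_cyc_next_eq[OF fB subset_refl True] cyc_prev_in[OF fB] by auto
  next
    case False
    then have "\<forall>b\<in>B. cyc_next B b \<noteq> v" using cyc_next_in[OF fB S(3)] by metis
    then show ?thesis using False by simp
  qed
  then show ?thesis
    unfolding canon_graph_def mdeg_image_mset_pairs[OF fB] sum.distrib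
    using sum_of_bool_cyc_next_eq[OF S(1,2,4)] by simp
qed

lemma consistent_on_canon_graph:
  assumes "finite S" "partition_on S P"
  shows "consistent_on S P (canon_graph S)"
  unfolding consistent_on_def
proof (rule conjI; intro ballI)
  fix B e assume B: "B \<in> P" and e: "e \<in># canon_graph S B"
  have BS: "B \<subseteq> S" "B \<noteq> {}"
    using partition_on_subsetD[OF assms(2) B] partition_on_nonemptyD[OF assms(2) B] by auto
  have fB: "finite B" using BS assms finite_subset by blast
  obtain b where b: "b \<in> B" "e = {cyc_next S b, cyc_next B b}"
    using e fB by (auto simp: canon_graph_def)
  have "cyc_next S b \<in> S" "cyc_next B b \<in> S"
    using cyc_next_in[OF assms(1)] cyc_next_in[OF fB BS(2)] BS b by auto
  then show "e \<subseteq> S \<and> (card e = 1 \<or> card e = 2)"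
    using b by (cases "cyc_next S b = cyc_next B b") auto
next
  fix B v assume "B \<in> P" "v \<in> S"
  then show "mdeg (canon_graph S B) v = of_bool (v \<in> B) + of_bool (cyc_prev S v \<in> B)"
    using mdeg_canon_graph[OF assms(1)] partition_on_subsetD[OF assms(2)] partition_on_nonemptyD[OF assms(2)]
    by blast
qed

lemma loop_in_canon_graph: "finite S \<Longrightarrow> w \<in> S \<Longrightarrow> {w} \<in># canon_graph S S"
  unfolding canon_graph_def using cyc_prev_in[of S w] cyc_next_prev[of S w]
  by (auto intro!: image_eqI[of _ _ "cyc_prev S w"])

lemma canon_graph_delete_other:
  assumes "finite S" "card S \<ge> 2" "l \<in> S" "C \<subseteq> S" "l \<notin> C" "cyc_prev S l \<notin> C"
  shows "canon_graph (S - {l}) C = canon_graph S C"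
  unfolding canon_graph_def
proof (rule image_mset_cong)
  fix b assume "b \<in># mset_set C"
  then have b: "b \<in> C" using finite_subset[OF assms(4,1)] by simp
  have "cyc_next S b \<noteq> l" using cyc_next_eq_iff[OF assms(1) _ assms(3), of b] b assms(4,6) by auto
  then have "cyc_next (S - {l}) b = cyc_next S b" using cyc_next_remove[OF assms(1,3) _ _ assms(2), of b] b assms(4,5) by auto
  then show "{cyc_next (S - {l}) b, cyc_next C b} = {cyc_next S b, cyc_next C b}" by simp
qed

lemma canon_graph_delete_loop:
  assumes "finite S" "card S \<ge> 2" "l \<in> B" "cyc_prev S l \<in> B" "B \<subseteq> S"
  shows "canon_graph S B = canon_graph (S - {l}) (B - {l}) + {#{l}#}"
proof -
  define p where "p = cyc_prev S l"
  have lS: "l \<in> S" using assms by auto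
  have pl: "p \<noteq> l" using cyc_prev_neq[OF assms(1) lS assms(2)] by (simp add: p_def)
  have pB: "p \<in> B" using assms by (simp add: p_def)
  have fB: "finite B" using assms finite_subset by blast
  have cB: "card B \<ge> 2"
  proof -
    have "{p, l} \<subseteq> B" using pB assms(3) by auto
    then have "card {p,l} \<le> card B" using fB card_mono by blast
    then show ?thesis using pl by simp
  qed
  have nSp: "cyc_next S p = l" using cyc_next_prev[OF assms(1) lS] by (simp add: p_def)
  have nBp: "cyc_next B p = l" using cyc_next_subset[OF assms(1,5), of p] nSp assms(3) by simp
  have pBl: "cyc_prev B l = p" using cyc_prev_subset[OF assms(1,5), of l] assms(4) by (simp add: p_def)
  have nS'p: "cyc_next (S - {l}) p = cyc_next S l" using cyc_next_remove[OF assms(1) lS _ pl assms(2)] nSp pB assms(5) by auto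
  have nB'p: "cyc_next (B - {l}) p = cyc_next B l" using cyc_next_remove[OF fB assms(3) pB pl cB] nBp by simp
  have rest: "{cyc_next (S - {l}) b, cyc_next (B - {l}) b} = {cyc_next S b, cyc_next B b}" if b: "b \<in> B - {l, p}" for b
  proof -
    have bS: "b \<in> S" using b assms(5) by auto
    have "cyc_next S b \<noteq> l" using cyc_next_eq_iff[OF assms(1) bS lS] b by (auto simp: p_def)
    then have 1: "cyc_next (S - {l}) b = cyc_next S b" using cyc_next_remove[OF assms(1) lS bS _ assms(2)] b by auto
    have "cyc_next B b \<noteq> l" using cyc_next_eq_iff[OF fB _ assms(3), of b] b pBl by auto
    then have 2: "cyc_next (B - {l}) b = cyc_next B b" using cyc_next_remove[OF fB assms(3) _ _ cB, of b] b by auto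
    show ?thesis using 1 2 by simp
  qed
  have m2: "mset_set (B - {l}) = add_mset p (mset_set (B - {l, p}))"
  proof -
    have "p \<in> B - {l}" using pB pl by auto
    then have "mset_set (B - {l}) = add_mset p (mset_set (B - {l} - {p}))"
      using fB by (simp add: mset_set.remove)
    moreover have "B - {l} - {p} = B - {l, p}" by auto
    ultimately show ?thesis by simp
  qed
  have m1: "mset_set B = add_mset l (add_mset p (mset_set (B - {l, p})))"
    using m2 fB assms(3) by (simp add: mset_set.remove)
  have r: "image_mset (\<lambda>b. {cyc_next (S - {l}) b, cyc_next (B - {l}) b}) (mset_set (B - {l, p}))
        = image_mset (\<lambda>b. {cyc_next S b, cyc_next B b}) (mset_set (B - {l, p}))"
    by (rule image_mset_cong) (use rest fB in auto)
  show ?thesis unfolding canon_graph_def m1 m2 using r nSp nBp nS'p nB'p by simp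
qed

lemma canon_graph_delete_singleton:
  assumes "finite S" "card S \<ge> 2" "l \<in> S" "A \<subseteq> S" "cyc_prev S l \<in> A" "l \<notin> A"
  shows "{l, cyc_next A (cyc_prev S l)} \<in># canon_graph S A"
    "canon_graph (S - {l}) A = canon_graph S A - {#{l, cyc_next A (cyc_prev S l)}#} + {#{cyc_next S l, cyc_next A (cyc_prev S l)}#}"
    "\<forall>e\<in>#canon_graph (S - {l}) A. cyc_next S l \<in> e \<longrightarrow> e = {cyc_next S l, cyc_next A (cyc_prev S l)}"
proof -
  define p where "p = cyc_prev S l"
  define q where "q = cyc_next A p"
  have pl: "p \<noteq> l" using cyc_prev_neq[OF assms(1,3,2)] by (simp add: p_def)
  have pA: "p \<in> A" using assms by (simp add: p_def)
  have fA: "finite A" using assms finite_subset by blast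
  have nSp: "cyc_next S p = l" using cyc_next_prev[OF assms(1,3)] by (simp add: p_def)
  have nS'p: "cyc_next (S - {l}) p = cyc_next S l" using cyc_next_remove[OF assms(1,3) _ pl assms(2)] nSp pA assms(4) by auto
  have m1: "mset_set A = add_mset p (mset_set (A - {p}))"
    using fA pA by (simp add: mset_set.remove)
  have rest: "cyc_next (S - {l}) b = cyc_next S b" if b: "b \<in> A - {p}" for b
  proof -
    have bS: "b \<in> S" using b assms(4) by auto
    have "cyc_next S b \<noteq> l" using cyc_next_eq_iff[OF assms(1) bS assms(3)] b by (auto simp: p_def)
    then show ?thesis using cyc_next_remove[OF assms(1,3) bS _ assms(2)] b assms(6) by auto
  qed
  have r: "image_mset (\<lambda>b. {cyc_next (S - {l}) b, cyc_next A b}) (mset_set (A - {p}))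
        = image_mset (\<lambda>b. {cyc_next S b, cyc_next A b}) (mset_set (A - {p}))"
    by (rule image_mset_cong) (use rest fA in auto)
  have cS: "canon_graph S A = add_mset {l, q} (image_mset (\<lambda>b. {cyc_next S b, cyc_next A b}) (mset_set (A - {p})))"
    unfolding canon_graph_def m1 using nSp by (simp add: q_def)
  have cS': "canon_graph (S - {l}) A = add_mset {cyc_next S l, q} (image_mset (\<lambda>b. {cyc_next S b, cyc_next A b}) (mset_set (A - {p})))"
    unfolding canon_graph_def m1 using nS'p r by (simp add: q_def)
  show "{l, cyc_next A (cyc_prev S l)} \<in># canon_graph S A" using cS by (simp add: q_def p_def)
  show "canon_graph (S - {l}) A = canon_graph S A - {#{l, cyc_next A (cyc_prev S l)}#} + {#{cyc_next S l, cyc_next A (cyc_prev S l)}#}"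
    using cS cS' by (simp add: q_def p_def)
  show "\<forall>e\<in>#canon_graph (S - {l}) A. cyc_next S l \<in> e \<longrightarrow> e = {cyc_next S l, cyc_next A (cyc_prev S l)}"
  proof (intro ballI impI)
    fix e assume e: "e \<in># canon_graph (S - {l}) A" and x: "cyc_next S l \<in> e"
    show "e = {cyc_next S l, cyc_next A (cyc_prev S l)}"
    proof (cases "e = {cyc_next S l, q}")
      case True then show ?thesis by (simp add: q_def p_def)
    next
      case False
      then obtain b where b: "b \<in> A - {p}" "e = {cyc_next S b, cyc_next A b}" using e cS' fA by auto
      have bS: "b \<in> S" using b assms(4) by auto
      have "cyc_next S b \<noteq> cyc_next S l" using cyc_next_inj[OF assms(1) bS assms(3)] b assms(6) by auto
      then have nA: "cyc_next A b = cyc_next S l" using x b by auto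
      define xx where "xx = cyc_next S l"
      have xA: "xx \<in> A" using nA cyc_next_in[OF fA] pA by (metis empty_iff xx_def)
      have xl: "xx \<noteq> l" using cyc_next_neq[OF assms(1,3,2)] by (simp add: xx_def)
      have xS: "xx \<in> S" using xA assms(4) by auto
      have "cyc_prev S xx = l" using cyc_prev_next[OF assms(1,3)] by (simp add: xx_def)
      then have "cyc_prev (S - {l}) xx = p"
        using cyc_prev_remove[OF assms(1,3) xS xl assms(2)] by (simp add: p_def)
      then have "cyc_prev A xx = p"
        using cyc_prev_subset[of "S - {l}" A xx] assms(1,4,6) pA by auto
      moreover have "cyc_prev A xx = b" using cyc_prev_next[OF fA] b nA by (metis DiffD1 xx_def)
      ultimately show ?thesis using b by auto
    qed
  qed
qed

lemma edge_union_canon_graphE: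
  assumes "finite S" "partition_on S P" "e \<in># union_graph P (canon_graph S)"
  shows "\<exists>C\<in>P. \<exists>b\<in>C. e = {cyc_next S b, cyc_next C b}"
proof -
  have "finite P" using finite_elements assms by blast
  then have "e \<in># (\<Sum>C\<in>P. canon_graph S C) \<Longrightarrow> \<exists>C\<in>P. \<exists>b\<in>C. e = {cyc_next S b, cyc_next C b}"
  proof (induction P rule: finite_induct)
    case empty then show ?case by simp
  next
    case (insert C F)
    then have "e \<in># canon_graph S C \<or> e \<in># (\<Sum>C\<in>F. canon_graph S C)" by simp
    then show ?case
    proof
      assume "e \<in># canon_graph S C"
      then have "\<exists>b\<in>C. e = {cyc_next S b, cyc_next C b}" unfolding canon_graph_def
        by (metis (no_types, lifting) empty_iff finite_set_mset_mset_set image_iff infinite_set_mset_mset_set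
            set_image_mset set_mset_empty)
      then show ?thesis by blast
    next
      assume "e \<in># (\<Sum>C\<in>F. canon_graph S C)"
      then show ?thesis using insert by blast
    qed
  qed
  then show ?thesis using assms(3) by (simp add: union_graph_def)
qed

lemma mem_union_canon_graph:
  assumes "finite S" "partition_on S P" "C \<in> P" "b \<in> C"
  shows "{cyc_next S b, cyc_next C b} \<in># union_graph P (canon_graph S)"
proof -
  have fP: "finite P" using finite_elements assms by blast
  have fC: "finite C" using finite_block assms by blast
  have "{cyc_next S b, cyc_next C b} \<in># canon_graph S C" using fC assms(4) by (simp add: canon_graph_def)
  moreover have "union_graph P (canon_graph S) = canon_graph S C + (\<Sum>X\<in>P - {C}. canon_graph S X)"
    unfolding union_graph_def using fP assms(3) by (simp add: sum.remove)
  ultimately show ?thesis by simp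
qed

lemma union_canon_graph_subset:
  assumes "finite S" "partition_on S P" shows "\<forall>e\<in>#union_graph P (canon_graph S). e \<subseteq> S"
proof
  fix e assume "e \<in># union_graph P (canon_graph S)"
  then obtain C b where Cb: "C \<in> P" "b \<in> C" "e = {cyc_next S b, cyc_next C b}" using edge_union_canon_graphE[OF assms] by blast
  have "C \<subseteq> S" "C \<noteq> {}" "finite C" using partition_on_subsetD[OF assms(2) Cb(1)] partition_on_nonemptyD[OF assms(2) Cb(1)]
      finite_block[OF assms Cb(1)] by auto
  then show "e \<subseteq> S" using Cb cyc_next_in[OF assms(1)] cyc_next_in[of C] by auto
qed

section \<open>The bound on the number of components\<close>

definition component_bound :: "nat set \<Rightarrow> nat set set \<Rightarrow> (nat set \<Rightarrow> nat set multiset) \<Rightarrow> bool" where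
  "component_bound S P E \<longleftrightarrow>
     card (components_on S (union_graph P E)) + card P \<le> card S + 1 \<and>
     (card (components_on S (union_graph P E)) + card P = card S + 1 \<longrightarrow>
        \<not> crossing P \<and> (\<forall>B\<in>P. E B = canon_graph S B))"

lemma component_bound_if_less:
  "card (components_on S (union_graph P E)) + card P < card S + 1 \<Longrightarrow> component_bound S P E"
  by (simp add: component_bound_def)

lemma partition_on_singleton:
  assumes "partition_on {s} P" shows "P = {{s}}"
proof -
  have "\<forall>B\<in>P. B = {s}" using partition_on_subsetD[OF assms] partition_on_nonemptyD[OF assms] by blast
  moreover have "P \<noteq> {}" using assms unfolding partition_on_def by auto
  ultimately show ?thesis by auto
qed

lemma component_bound_singleton:
  assumes "card S = 1" "partition_on S P" "consistent_on S P E"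
  shows "component_bound S P E"
proof -
  obtain s where S: "S = {s}" using assms(1) card_1_singletonE by blast
  have P: "P = {{s}}" using assms(2) unfolding S by (rule partition_on_singleton)
  have edges: "\<forall>e\<in>#E {s}. e \<subseteq> S \<and> (card e = 1 \<or> card e = 2)"
    using assms(3) P by (simp add: consistent_on_def)
  have "2 * size (E {s}) = 2"
    using sum_mdeg_eq_twice_size[OF edges] assms(3) P S by (simp add: consistent_on_def cyc_prev_singleton)
  then obtain e where e: "E {s} = {#e#}" using size_1_singleton_mset[of "E {s}"] by auto
  then have "e = {s}" using edges S by (auto simp: subset_singleton_iff)
  moreover have "canon_graph S {s} = {#{s}#}" using S by (simp add: canon_graph_def cyc_next_singleton)
  moreover have "card (components_on S {#{s}#}) = 1" by (simp add: components_on_def S quotient_def)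
  moreover have "\<not> crossing P" unfolding crossing_def P by auto
  ultimately show ?thesis using P S e by (simp add: component_bound_def union_graph_def)
qed

lemma loop_not_change_point:
  assumes "partition_on S P" "consistent_on S P E" "Z \<in> P" "v \<in> S" "{v} \<in># E Z"
  shows "v \<notin> change_points S P"
proof -
  have "mdeg (E Z) v = of_bool (v \<in> Z) + of_bool (cyc_prev S v \<in> Z)"
    using assms(2-4) unfolding consistent_on_def by auto
  with mdeg_loop_ge_2[OF assms(5)] have "v \<in> Z" "cyc_prev S v \<in> Z"
    by (auto simp: of_bool_def split: if_splits)
  then show ?thesis using block_of_eq[OF assms(1,3)] by (simp add: change_points_def)
qed

context vertex_deletion
begin

lemma card_S_delete: "card (S - {l}) + 1 = card S"
  using finS lS cardS by (simp add: card_Diff_singleton)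

lemma crossing_P':
  assumes w: "X \<in> P" "Y \<in> P" "X \<noteq> Y" "i < j" "j < i'" "i' < j'" "i \<in> X" "i' \<in> X" "j \<in> Y" "j' \<in> Y"
    and l: "l \<notin> X" "l \<notin> Y"
  shows "crossing P'"
proof -
  define f where "f Z = (if Z = A then D else Z)" for Z
  have f: "f Z \<in> P' \<and> Z \<subseteq> f Z" if "Z \<in> P" "l \<notin> Z" for Z
    using that l_in_B by (auto simp: f_def merged_partition_def merged_block_def)
  have "f X \<noteq> f Y" using w(1-3) l l_in_B D_notin by (auto simp: f_def)
  then show ?thesis using crossingI[of "f X" P' "f Y" i j i' j'] f[OF w(1) l(1)] f[OF w(2) l(2)] w by blast
qed

lemma canon_graph_other_block:
  "Z \<in> P \<Longrightarrow> Z \<noteq> A \<Longrightarrow> Z \<noteq> B \<Longrightarrow> canon_graph (S - {l}) Z = canon_graph S Z"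
  using canon_graph_delete_other[OF finS cardS lS partition_on_subsetD[OF partS]] other_disjoint l_in_B prev_in_A
  by blast

lemma singleton_block_graph:
  assumes B: "B = {l}" and x: "{l,x} \<in># E B" "x \<noteq> l"
  shows "x = cyc_next S l" "E B = {#{l,x}#}"
proof -
  have xS: "x \<in> S" using edge_E[OF B_in_P x(1)] by auto
  have "mdeg (E B) x \<ge> 1" using mdeg_ge_1_if_mem[OF x(1)] by simp
  then have "cyc_prev S x = l" using mdeg_E[OF B_in_P xS] x(2) B by (auto simp: of_bool_def split: if_splits)
  then show x_next: "x = cyc_next S l" using cyc_next_prev[OF finS xS] by simp
  have zero: "mdeg (E B - {#{l,x}#}) v = 0" if v: "v \<in> S" for v
  proof -
    have "cyc_prev S v = l \<longleftrightarrow> v = x" using cyc_next_eq_iff[OF finS lS v] x_next by auto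
    then show ?thesis using mdeg_diff_single[OF x(1), of v] mdeg_E[OF B_in_P v] B x(2)
      by (auto simp: of_bool_def mdeg_pair)
  qed
  have "E B - {#{l,x}#} = {#}"
  proof (rule ccontr)
    assume "E B - {#{l,x}#} \<noteq> {#}"
    then obtain e where e: "e \<in># E B - {#{l,x}#}" by (meson multiset_nonemptyE)
    then have "e \<subseteq> S" "e \<noteq> {}" using edge_E[OF B_in_P] by (fastforce dest: in_diffD)+
    then show False using not_mem_if_mdeg_0[OF zero e] by blast
  qed
  then show "E B = {#{l,x}#}" using x(1) by (metis add_cancel_left_left insert_DiffM2 add_mset_add_single)
qed

end

locale deletion_step = vertex_deletion +
  assumes IH: "\<And>v Q M. v \<in> S \<Longrightarrow> partition_on (S - {v}) Q \<Longrightarrow> consistent_on (S - {v}) Q M \<Longrightarrow>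
    component_bound (S - {v}) Q M"
begin

lemma bound_transfer:
  assumes M: "consistent_on (S - {l}) P' M"
    and le: "card (components_on S (union_graph P E)) + card P
      \<le> card (components_on (S - {l}) (union_graph P' M)) + card P' + 1"
  shows "card (components_on S (union_graph P E)) + card P \<le> card S + 1"
    and "card (components_on S (union_graph P E)) + card P = card S + 1 \<Longrightarrow>
      \<not> crossing P' \<and> (\<forall>Z\<in>P'. M Z = canon_graph (S - {l}) Z)"
  using IH[OF lS partition_P' M] le card_S_delete unfolding component_bound_def by linarith+

lemma deletion_le:
  obtains M where "consistent_on (S - {l}) P' M"
    "card (components_on S (union_graph P E)) + card P
       \<le> card (components_on (S - {l}) (union_graph P' M)) + card P' + 1"
proof (cases "{l} \<in># E B")
  case True
  then show ?thesis using that delete_loop[OF True] card_P' by simp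
next
  case False
  then obtain x y where xy: "{l,x} \<in># E B" "x \<noteq> l" "{l,y} \<in># (if A = B then E B - {#{l,x}#} else E A)" "y \<noteq> l"
    by (rule path_at_l)
  have "card P \<ge> 1" using card_partition_on_pos[OF finS _ partS] lS by blast
  then show ?thesis using that contract_path[OF xy] card_P' by (simp split: if_splits)
qed

lemma less_if_crossing_P':
  assumes "crossing P'"
  shows "card (components_on S (union_graph P E)) + card P < card S + 1"
proof -
  obtain M where "consistent_on (S - {l}) P' M"
    "card (components_on S (union_graph P E)) + card P
       \<le> card (components_on (S - {l}) (union_graph P' M)) + card P' + 1"
    by (rule deletion_le)
  from bound_transfer[OF this] assms show ?thesis by fastforce
qed

text \<open>A crossing partition with only two blocks: then P' = {S - {l}}, and were the bound tight,
  the graph of S - {l} would be the canonical one, which has a loop at every vertex; but loops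
  only occur away from the (at least four) change points.\<close>
lemma less_if_two_blocks:
  assumes "crossing P" "card P = 2" "l \<in> change_points S P"
  shows "card (components_on S (union_graph P E)) + card P < card S + 1"
proof -
  have AB: "A \<noteq> B" using assms(3) by (simp add: change_points_def)
  then have "{l} \<notin># E B" using delete_loop(1) by blast
  then obtain x y where xy: "{l,x} \<in># E B" "x \<noteq> l" "{l,y} \<in># (if A = B then E B - {#{l,x}#} else E A)" "y \<noteq> l"
    by (rule path_at_l)
  define M where "M = F - {#{l,x}, {l,y}#} + {#{x,y}#}"
  note path = contract_path[OF xy, folded M_def]
  have card_P': "card P' = 1" using card_P' AB assms(2) by simp
  moreover have "D \<in> P'" by (simp add: merged_partition_def)
  ultimately have P': "P' = {D}" by (metis card_1_singletonE singletonD)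
  then have D: "D = S - {l}" using partition_P' by (simp add: partition_on_def)
  show ?thesis
  proof (rule ccontr)
    assume "\<not> ?thesis"
    then have "card (components_on S (union_graph P E)) + card P = card S + 1"
      using bound_transfer(1)[OF path(1)] path(2) card_P' assms(2) by linarith
    then have canon: "M = canon_graph (S - {l}) (S - {l})"
      using bound_transfer(2)[OF path(1)] path(2) card_P' assms(2) P' D by simp
    have "change_points S P \<subseteq> {l, x}"
    proof
      fix v assume v: "v \<in> change_points S P"
      show "v \<in> {l, x}"
      proof (rule ccontr)
        assume "v \<notin> {l, x}"
        then have "v \<in> S - {l}" "{v} \<noteq> {x,y}" using v by (auto simp: change_points_def)
        have "{v} \<in># M" using loop_in_canon_graph[of "S - {l}" v] finS canon \<open>v \<in> S - {l}\<close> by simp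
        then have "{v} \<in># F - {#{l,x}, {l,y}#}"
          using \<open>{v} \<noteq> {x,y}\<close> unfolding M_def by (auto split del: if_split)
        then have "{v} \<in># E A \<or> {v} \<in># E B" by (cases "A = B") (auto dest: in_diffD)
        then show False
          using loop_not_change_point[OF partS consE] A_in_P B_in_P v \<open>v \<in> S - {l}\<close> by blast
      qed
    qed
    then have "card (change_points S P) \<le> card {l, x}" by (intro card_mono) auto
    also have "\<dots> \<le> 2" by (cases "l = x") auto
    finally have "card (change_points S P) \<le> 2" .
    then show False using card_change_points_ge_4[OF finS partS assms(1)] by simp
  qed
qed

lemma bound_if_prev_same_block:
  assumes nc: "\<not> crossing P" and AB: "A = B"
  shows "component_bound S P E"
proof -
  have D: "D = B - {l}" using AB by (simp add: merged_block_def)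
  have card: "card P' = card P" using card_P' AB by simp
  show ?thesis
  proof (cases "{l} \<in># E B")
    case False
    then obtain x y where xy: "{l,x} \<in># E B" "x \<noteq> l" "{l,y} \<in># (if A = B then E B - {#{l,x}#} else E A)" "y \<noteq> l"
      by (rule path_at_l)
    define M where "M = F - {#{l,x}, {l,y}#} + {#{x,y}#}"
    note path = contract_path[OF xy, folded M_def]
    have "card (components_on (S - {l}) (union_graph P' (E(D := M)))) + card P' \<le> card (S - {l}) + 1"
      using IH[OF lS partition_P' path(1)] by (simp add: component_bound_def)
    then show ?thesis using path(2) card card_S_delete by (intro component_bound_if_less) linarith
  next
    case loop: True
    define M where "M = E B - {#{l}#}"
    note del = delete_loop[OF loop, folded M_def]
    have le: "card (components_on S (union_graph P E)) + card P
        \<le> card (components_on (S - {l}) (union_graph P' (E(D := M)))) + card P' + 1"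
      using del(3) card by simp
    show ?thesis unfolding component_bound_def
    proof (intro conjI impI ballI)
      show "card (components_on S (union_graph P E)) + card P \<le> card S + 1"
        by (rule bound_transfer(1)[OF del(2) le])
      show "\<not> crossing P" by (rule nc)
      assume tight: "card (components_on S (union_graph P E)) + card P = card S + 1"
      fix Z assume Z: "Z \<in> P"
      have canon: "(E(D := M)) Y = canon_graph (S - {l}) Y" if "Y \<in> P'" for Y
        using bound_transfer(2)[OF del(2) le tight] that by blast
      show "E Z = canon_graph S Z"
      proof (cases "Z = B")
        case True
        have "E B - {#{l}#} = canon_graph (S - {l}) (B - {l})"
          using canon[of D] D by (simp add: M_def merged_partition_def)
        then have "E B = canon_graph (S - {l}) (B - {l}) + {#{l}#}" using loop by (metis insert_DiffM2)
        then show ?thesis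
          using canon_graph_delete_loop[OF finS cardS l_in_B _ partition_on_subsetD[OF partS B_in_P]]
            prev_in_A AB True by simp
      next
        case False
        then have "Z \<in> P'" "Z \<noteq> D" using Z D_notin AB by (auto simp: merged_partition_def)
        then show ?thesis using canon[of Z] canon_graph_other_block[OF Z] False AB by simp
      qed
    qed
  qed
qed

lemma bound_if_singleton_block:
  assumes nc: "\<not> crossing P" and B: "B = {l}"
  shows "component_bound S P E"
proof -
  have AB: "A \<noteq> B" using prev_in_A prev_neq B by auto
  have D: "D = A" using A_B_disjoint[OF AB] B by (auto simp: merged_block_def)
  have "card P \<ge> 1" using card_partition_on_pos[OF finS _ partS] lS by blast
  then have card: "card P = card P' + 1" using card_P' AB by simp
  have "{l} \<notin># E B" using delete_loop(1) AB by blast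
  then obtain x y where xy: "{l,x} \<in># E B" "x \<noteq> l" "{l,y} \<in># (if A = B then E B - {#{l,x}#} else E A)" "y \<noteq> l"
    by (rule path_at_l)
  have x: "x = cyc_next S l" and EB: "E B = {#{l,x}#}" using singleton_block_graph[OF B xy(1,2)] by simp_all
  have y: "{l,y} \<in># E A" using xy(3) AB by simp
  define M where "M = F - {#{l,x}, {l,y}#} + {#{x,y}#}"
  have M: "M = E A - {#{l,y}#} + {#{x,y}#}" using AB EB by (simp add: M_def add_mset_commute)
  note path = contract_path[OF xy, folded M_def]
  have le: "card (components_on S (union_graph P E)) + card P
      \<le> card (components_on (S - {l}) (union_graph P' (E(D := M)))) + card P' + 1"
    using path(2) card by simp
  show ?thesis unfolding component_bound_def
  proof (intro conjI impI ballI)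
    show "card (components_on S (union_graph P E)) + card P \<le> card S + 1"
      by (rule bound_transfer(1)[OF path(1) le])
    show "\<not> crossing P" by (rule nc)
    assume tight: "card (components_on S (union_graph P E)) + card P = card S + 1"
    fix Z assume Z: "Z \<in> P"
    have canon: "(E(D := M)) Y = canon_graph (S - {l}) Y" if "Y \<in> P'" for Y
      using bound_transfer(2)[OF path(1) le tight] that by blast
    consider "Z = B" | "Z = A" | "Z \<noteq> A" "Z \<noteq> B" by blast
    then show "E Z = canon_graph S Z"
    proof cases
      case 1
      then show ?thesis using EB B x by (simp add: canon_graph_def cyc_next_singleton insert_commute)
    next
      case 2
      have A: "A \<subseteq> S" "l \<notin> A" using partition_on_subsetD[OF partS A_in_P] A_B_disjoint[OF AB] l_in_B by auto
      define q where "q = cyc_next A p"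
      note del = canon_graph_delete_singleton[OF finS cardS lS A(1) prev_in_A A(2), folded q_def]
      have M_canon: "M = canon_graph (S - {l}) A" using canon[of D] D by (simp add: merged_partition_def)
      have "{x,y} \<in># M" by (simp add: M)
      then have "{x,y} \<in># canon_graph (S - {l}) A" using M_canon by simp
      then have "y = q" using del(3) x by (metis doubleton_eq_iff insertI1)
      have "E A - {#{l,y}#} = canon_graph S A - {#{l,y}#}"
        using M_canon del(2) x \<open>y = q\<close> by (simp add: M)
      then have "E A = canon_graph S A" using y del(1) \<open>y = q\<close> by (metis insert_DiffM)
      then show ?thesis using 2 by simp
    next
      case 3
      then have "Z \<in> P'" "Z \<noteq> D" using Z D by (auto simp: merged_partition_def)
      then show ?thesis using canon[of Z] canon_graph_other_block[OF Z 3] by simp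
    qed
  qed
qed

end

lemma card_partition_on_two_blocks:
  assumes "partition_on S P" "X \<in> P" "Y \<in> P" "X \<noteq> Y" "S \<subseteq> X \<union> Y"
  shows "card P = 2"
proof -
  have "Z = X \<or> Z = Y" if Z: "Z \<in> P" for Z
  proof -
    obtain z where "z \<in> Z" using partition_on_nonemptyD[OF assms(1) Z] by auto
    then show ?thesis
      using partition_on_subsetD[OF assms(1) Z] assms(5) partition_on_disjointD[OF assms(1) Z]
        assms(2,3) by blast
  qed
  then have "P = {X, Y}" using assms(2,3) by auto
  then show ?thesis using assms(4) by simp
qed

text \<open>The induction deletes a vertex l chosen according to the shape of P: avoiding a crossing pair
  of blocks, at a change point if there are only two blocks, with its predecessor in the same block,
  or forming a singleton block (one of the last two exists if P is non-crossing).\<close>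
theorem component_bound:
  assumes "finite S" "S \<noteq> {}" "partition_on S P" "consistent_on S P E"
  shows "component_bound S P E"
  using assms
proof (induction "card S" arbitrary: S P E rule: less_induct)
  case less
  note finS = less.prems(1) and partS = less.prems(3)
  show ?case
  proof (cases "card S = 1")
    case True
    then show ?thesis using component_bound_singleton less.prems by blast
  next
    case False
    moreover have "card S \<noteq> 0" using less.prems(1,2) by simp
    ultimately have cardS: "card S \<ge> 2" by linarith
    have step: "deletion_step S P E l" if lS: "l \<in> S" for l
    proof (unfold_locales)
      fix v Q M assume "v \<in> S" "partition_on (S - {v}) Q" "consistent_on (S - {v}) Q M"
      moreover have "card (S - {v}) < card S" using \<open>v \<in> S\<close> finS cardS by simp
      moreover have "S - {v} \<noteq> {}"
      proof
        assume "S - {v} = {}"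
        then have "card S \<le> card {v}" using card_mono[of "{v}" S] by auto
        then show False using cardS by simp
      qed
      ultimately show "component_bound (S - {v}) Q M" using less.hyps finS by blast
    qed (use less.prems cardS lS in auto)
    show ?thesis
    proof (cases "crossing P")
      case True
      then obtain X Y i j i' j' where w: "X \<in> P" "Y \<in> P" "X \<noteq> Y" "i < j" "j < i'" "i' < j'"
        "i \<in> X" "i' \<in> X" "j \<in> Y" "j' \<in> Y" by (rule crossingE)
      show ?thesis
      proof (cases "S \<subseteq> X \<union> Y")
        case False
        then obtain l where l: "l \<in> S" "l \<notin> X" "l \<notin> Y" by blast
        have "crossing (merged_partition S P l)"
          using vertex_deletion.crossing_P'[OF deletion_step.axioms(1)[OF step[OF l(1)]] w l(2,3)] .
        then show ?thesis
          using deletion_step.less_if_crossing_P'[OF step[OF l(1)]] component_bound_if_less by blast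
      next
        case True
        then have two: "card P = 2" using card_partition_on_two_blocks[OF partS w(1-3)] by blast
        obtain l where l: "l \<in> change_points S P"
          using card_change_points_ge_4[OF finS partS \<open>crossing P\<close>] by fastforce
        then have "l \<in> S" by (simp add: change_points_def)
        show ?thesis
          using deletion_step.less_if_two_blocks[OF step[OF \<open>l \<in> S\<close>] \<open>crossing P\<close> two l]
          by (rule component_bound_if_less)
      qed
    next
      case nc: False
      show ?thesis
      proof (cases "\<exists>l\<in>S. block_of P (cyc_prev S l) = block_of P l")
        case True
        then show ?thesis using deletion_step.bound_if_prev_same_block[OF step nc] by blast
      next
        case False
        then obtain l where "{l} \<in> P" using not_crossing_singleton_block[OF finS partS nc less.prems(2)] by blast
        moreover then have "l \<in> S" "block_of P l = {l}"
          using partition_on_subsetD[OF partS] block_of_eq[OF partS] by auto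
        ultimately show ?thesis using deletion_step.bound_if_singleton_block[OF step nc] by blast
      qed
    qed
  qed
qed

locale canonical_deletion = vertex_deletion S P "canon_graph S" l for S P l
begin

lemma card_components_canon_same_block:
  assumes "A = B"
  shows "card (components_on S (union_graph P (canon_graph S)))
    = card (components_on (S - {l}) (union_graph P' (canon_graph (S - {l})))) + 1"
proof -
  have BS: "B \<subseteq> S" using partition_on_subsetD[OF partS B_in_P] .
  have D: "D = B - {l}" using assms by (simp add: merged_block_def)
  note del_canon = canon_graph_delete_loop[OF finS cardS l_in_B _ BS]
  have loop: "{l} \<in># canon_graph S B" using del_canon prev_in_A assms by simp
  have "((canon_graph S)(D := canon_graph S B - {#{l}#})) Z = canon_graph (S - {l}) Z" if "Z \<in> P'" for Z
  proof (cases "Z = D")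
    case True
    then show ?thesis using del_canon prev_in_A assms D by simp
  next
    case False
    then have "Z \<in> P" "Z \<noteq> B" using that D by (auto simp: merged_partition_def)
    then show ?thesis using canon_graph_other_block False assms by simp
  qed
  then have "union_graph P' ((canon_graph S)(D := canon_graph S B - {#{l}#})) = union_graph P' (canon_graph (S - {l}))"
    unfolding union_graph_def by (rule sum.cong[OF refl])
  then show ?thesis using delete_loop(3)[OF loop] by simp
qed

lemma card_components_canon_singleton:
  assumes "B = {l}"
  shows "card (components_on S (union_graph P (canon_graph S)))
    = card (components_on (S - {l}) (union_graph P' (canon_graph (S - {l}))))"
proof -
  have AB: "A \<noteq> B" using prev_in_A prev_neq assms by auto
  have D: "D = A" using A_B_disjoint[OF AB] assms by (auto simp: merged_block_def)
  have A: "A \<subseteq> S" "l \<notin> A" using partition_on_subsetD[OF partS A_in_P] A_B_disjoint[OF AB] l_in_B by auto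
  define q where "q = cyc_next A p"
  note del = canon_graph_delete_singleton[OF finS cardS lS A(1) prev_in_A A(2), folded q_def]
  have q: "q \<in> A" using cyc_next_in finite_subset[OF A(1) finS] prev_in_A by (auto simp: q_def)
  have canon_B: "canon_graph S B = {#{l, cyc_next S l}#}"
    using assms by (simp add: canon_graph_def cyc_next_singleton insert_commute)
  have x: "{l, cyc_next S l} \<in># canon_graph S B" "cyc_next S l \<noteq> l"
    using canon_B cyc_next_neq[OF finS lS cardS] by simp_all
  have y: "{l, q} \<in># (if A = B then canon_graph S B - {#{l, cyc_next S l}#} else canon_graph S A)" "q \<noteq> l"
    using del(1) AB q A(2) by auto
  have "((canon_graph S)(D := F - {#{l, cyc_next S l}, {l, q}#} + {#{cyc_next S l, q}#})) Z
      = canon_graph (S - {l}) Z" if "Z \<in> P'" for Z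
  proof (cases "Z = D")
    case True
    have "canon_graph S A + {#{l, cyc_next S l}#} - {#{l, cyc_next S l}, {l, q}#} = canon_graph S A - {#{l, q}#}"
      by (simp add: add_mset_commute)
    then show ?thesis using True D AB canon_B del(2) by simp
  next
    case False
    then have "Z \<in> P" "Z \<noteq> A" "Z \<noteq> B" using that D by (auto simp: merged_partition_def)
    then show ?thesis using canon_graph_other_block False by simp
  qed
  then have "union_graph P' ((canon_graph S)(D := F - {#{l, cyc_next S l}, {l, q}#} + {#{cyc_next S l, q}#}))
      = union_graph P' (canon_graph (S - {l}))"
    unfolding union_graph_def by (rule sum.cong[OF refl])
  then show ?thesis using contract_path(2)[OF x y] by simp
qed

end

theorem card_components_canon_graph:
  assumes "finite S" "S \<noteq> {}" "partition_on S P" "\<not> crossing P"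
  shows "card (components_on S (union_graph P (canon_graph S))) + card P = card S + 1"
  using assms
proof (induction "card S" arbitrary: S P rule: less_induct)
  case less
  note finS = less.prems(1) and partS = less.prems(3) and nc = less.prems(4)
  show ?case
  proof (cases "card S = 1")
    case True
    then obtain s where S: "S = {s}" using card_1_singletonE by blast
    have "P = {{s}}" using partS unfolding S by (rule partition_on_singleton)
    moreover have "card (components_on S G) = 1" for G by (simp add: components_on_def S quotient_def)
    ultimately show ?thesis using True by simp
  next
    case False
    moreover have "card S \<noteq> 0" using less.prems(1,2) by simp
    ultimately have cardS: "card S \<ge> 2" by linarith
    have del: "canonical_deletion S P l" if "l \<in> S" for l
      using finS cardS partS consistent_on_canon_graph[OF finS partS] that
      by unfold_locales simp_all
    have IH: "card (components_on (S - {l}) (union_graph P' (canon_graph (S - {l})))) + card P'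
        = card (S - {l}) + 1"
      if "l \<in> S" "partition_on (S - {l}) P'" "\<not> crossing P'" for l P'
    proof -
      have "S - {l} \<noteq> {}"
      proof
        assume "S - {l} = {}"
        then have "card S \<le> card {l}" using card_mono[of "{l}" S] by auto
        then show False using cardS by simp
      qed
      then show ?thesis using less.hyps[of "S - {l}"] that finS cardS by simp
    qed
    have card_delete: "card (S - {l}) + 1 = card S" if "l \<in> S" for l
      using finS that cardS by simp
    show ?thesis
    proof (cases "\<exists>l\<in>S. block_of P (cyc_prev S l) = block_of P l")
      case True
      then obtain l where l: "l \<in> S" "block_of P (cyc_prev S l) = block_of P l" by blast
      interpret canonical_deletion S P l using del[OF l(1)] .
      have P': "P' = insert (B - {l}) (P - {B})" using l(2) by (simp add: merged_partition_def merged_block_def)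
      have "\<not> crossing P'"
        unfolding P' by (rule not_crossing_shrink_block[OF nc partS B_in_P]) (use prev_in_A prev_neq l(2) in auto)
      then show ?thesis
        using card_components_canon_same_block[OF l(2)] IH[OF l(1) partition_P'] card_P' l(2) card_delete[OF l(1)]
        by simp
    next
      case False
      then obtain l where "{l} \<in> P" using not_crossing_singleton_block[OF finS partS nc less.prems(2)] by blast
      moreover then have l: "l \<in> S" "block_of P l = {l}"
        using partition_on_subsetD[OF partS] block_of_eq[OF partS] by auto
      interpret canonical_deletion S P l using del[OF l(1)] .
      have AB: "A \<noteq> B" using prev_in_A prev_neq l(2) by auto
      have "card P \<ge> 1" using card_partition_on_pos[OF finS less.prems(2) partS] .
      moreover have "P' \<subseteq> P"
        using A_in_P A_B_disjoint[OF AB] l(2) by (auto simp: merged_partition_def merged_block_def)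
      then have "\<not> crossing P'" using not_crossing_subset[OF nc] by blast
      ultimately show ?thesis
        using card_components_canon_singleton[OF l(2)] IH[OF l(1) partition_P'] card_P' AB card_delete[OF l(1)]
        by simp
    qed
  qed
qed

section \<open>The Kreweras complement\<close>

abbreviation canon_components :: "nat set \<Rightarrow> nat set set \<Rightarrow> nat set set" where
  "canon_components S P \<equiv> components_on S (union_graph P (canon_graph S))"

lemma cyc_next_in_arc_iff:
  assumes "finite X" "t \<in> X" "t' \<in> X" "t < t'" "b \<in> X"
  shows "cyc_next X b \<in> {t<..t'} \<longleftrightarrow> t \<le> b \<and> b < t'"
proof (cases "\<exists>c\<in>X. b < c")
  case True
  then have "b < cyc_next X b" "\<forall>d\<in>X. b < d \<longrightarrow> cyc_next X b \<le> d"
    using cyc_next_char[OF assms(1), of b] assms(5) by auto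
  then show ?thesis using assms(2,3) by (meson greaterThanAtMost_iff leD le_less_trans linorder_le_less_linear)
next
  case False
  then have "\<forall>d\<in>X. cyc_next X b \<le> d" using cyc_next_char[OF assms(1), of b] assms(5) by auto
  then show ?thesis using False assms by (meson greaterThanAtMost_iff leD less_le_trans not_le)
qed

text \<open>In a non-crossing partition every block B cuts the cycle into arcs (t, t'] that no edge of the
  canonical graph leaves.\<close>
lemma cyc_next_block_in_arc_iff:
  assumes "finite S" "partition_on S P" "\<not> crossing P" "B \<in> P" "t \<in> B" "t' \<in> B" "t < t'" "C \<in> P" "b \<in> C"
  shows "cyc_next C b \<in> {t<..t'} \<longleftrightarrow> t \<le> b \<and> b < t'"
proof (cases "C = B")
  case True
  then show ?thesis using cyc_next_in_arc_iff[OF finite_block[OF assms(1,2,4)] assms(5-7)] assms(9) by simp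
next
  case False
  have "cyc_next C b \<in> C" using cyc_next_in[OF finite_block[OF assms(1,2,8)]] assms(9) by blast
  then show ?thesis
    using not_crossing_inside_or_outside[OF assms(3,2,4,8) False[symmetric] assms(5-7)] assms(9) by fastforce
qed

lemma edge_closed_arc:
  assumes "finite S" "partition_on S P" "\<not> crossing P" "B \<in> P" "t \<in> B" "t' \<in> B" "t < t'"
  shows "edge_closed (union_graph P (canon_graph S)) {t<..t'}"
  unfolding edge_closed_def
proof
  fix e assume "e \<in># union_graph P (canon_graph S)"
  then obtain C b where Cb: "C \<in> P" "b \<in> C" "e = {cyc_next S b, cyc_next C b}"
    using edge_union_canon_graphE[OF assms(1,2)] by blast
  have "b \<in> S" "t \<in> S" "t' \<in> S" using partition_on_subsetD[OF assms(2)] Cb assms(4-6) by blast+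
  then show "e \<subseteq> {t<..t'} \<or> e \<inter> {t<..t'} = {}"
    using cyc_next_in_arc_iff[OF assms(1) _ _ assms(7)] cyc_next_block_in_arc_iff[OF assms Cb(1,2)] Cb(3)
    by auto
qed

lemma arc_edge_leaving:
  assumes "finite S" "partition_on S P" "B \<in> P" "t \<in> B" "t' \<in> S" "t' \<notin> B" "t < t'"
  shows "\<exists>b\<in>B. cyc_next S b \<in> {t<..t'} \<and> cyc_next B b \<notin> {t<..t'}"
proof -
  have fB: "finite B" using finite_block[OF assms(1-3)] .
  define W where "W = {c\<in>B. c < t'}"
  have W: "finite W" "t \<in> W" using fB assms(4,7) by (simp_all add: W_def)
  define b where "b = Max W"
  have "b \<in> W" using Max_in[OF W(1)] W(2) unfolding b_def by blast
  then have b: "b \<in> B" "b < t'" "t \<le> b" "\<forall>c\<in>B. c < t' \<longrightarrow> c \<le> b"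
    using Max_ge[OF W(1)] W(2) unfolding b_def by (auto simp: W_def)
  have "t \<in> S" "b \<in> S" using partition_on_subsetD[OF assms(2,3)] assms(4) b(1) by auto
  then have "cyc_next S b \<in> {t<..t'}" using cyc_next_in_arc_iff[OF assms(1) _ assms(5,7)] b by simp
  moreover have "cyc_next B b \<notin> {t<..t'}"
  proof
    assume in_arc: "cyc_next B b \<in> {t<..t'}"
    have B_ne: "B \<noteq> {}" using b(1) by blast
    show False
    proof (cases "\<exists>c\<in>B. b < c")
      case True
      then have "b < cyc_next B b" "cyc_next B b \<in> B" using cyc_next_char[OF fB B_ne, of b] by auto
      moreover have "cyc_next B b < t'"
        using in_arc \<open>cyc_next B b \<in> B\<close> assms(6) by (cases "cyc_next B b = t'") auto
      ultimately show False using b(4) by fastforce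
    next
      case False
      then have "cyc_next B b \<le> t" using cyc_next_char[OF fB B_ne, of b] assms(4) by auto
      then show False using in_arc by simp
    qed
  qed
  ultimately show ?thesis using b(1) by blast
qed

text \<open>Were two components crossing, u1 < u2 < u1' < u2', take the least x > u2 in the component of u1:
  the edge from x to the block-successor q of its predecessor p stays in that component, and the arc
  between p and q separates one of the two components from itself.\<close>
lemma not_crossing_components_canon_graph:
  assumes finS: "finite S" and partS: "partition_on S P" and nc: "\<not> crossing P"
  shows "\<not> crossing (canon_components S P)"
proof
  define G where "G = union_graph P (canon_graph S)"
  assume "crossing (canon_components S P)"
  then obtain C1 C2 u1 u2 u1' u2' where w: "C1 \<in> components_on S G" "C2 \<in> components_on S G" "C1 \<noteq> C2"
    "u1 < u2" "u2 < u1'" "u1' < u2'" "u1 \<in> C1" "u1' \<in> C1" "u2 \<in> C2" "u2' \<in> C2"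
    unfolding G_def by (rule crossingE)
  have C_S: "C1 \<subseteq> S" "C2 \<subseteq> S"
    using components_on_subset[OF w(1)] components_on_subset[OF w(2)] union_canon_graph_subset[OF finS partS]
    by (simp_all add: G_def)
  define x where "x = Min {c\<in>C1. u2 < c}"
  have fin: "finite {c\<in>C1. u2 < c}" using finite_subset[OF C_S(1) finS] by simp
  have x: "x \<in> C1" "u2 < x" "x \<le> u1'" and x_min: "\<forall>c\<in>C1. u2 < c \<longrightarrow> x \<le> c"
    using Min_in[OF fin] Min_le[OF fin] w(5,8) unfolding x_def by auto
  have xS: "x \<in> S" "u2 \<in> S" using x C_S w(9) by auto
  define p where "p = cyc_prev S x"
  have "S \<noteq> {}" "\<exists>c\<in>S. c < x" using xS x by auto
  then have p: "p < x" "u2 \<le> p" "p \<in> S"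
    using cyc_prev_char[OF finS, of x] xS x(2) by (auto simp: p_def)
  define B where "B = block_of P p"
  have B: "B \<in> P" "p \<in> B" using block_of_in[OF partS p(3)] by (auto simp: B_def)
  define q where "q = cyc_next B p"
  have q: "q \<in> B" using cyc_next_in[OF finite_block[OF finS partS B(1)]] B by (auto simp: q_def)
  have "{cyc_next S p, q} \<in># G" using mem_union_canon_graph[OF finS partS B] by (simp add: G_def q_def)
  moreover have "cyc_next S p = x" using cyc_next_prev[OF finS xS(1)] by (simp add: p_def)
  ultimately have "(x, q) \<in> madj G" by (auto simp: madj_def)
  then have "q \<in> C1" using components_on_closed[OF w(1) x(1)] by blast
  then have "q \<noteq> u2" using components_on_not_rtrancl[OF w(1,2,3) _ w(9)] by blast
  have conn: "u \<in> Y \<longleftrightarrow> v \<in> Y" if "C \<in> components_on S G" "u \<in> C" "v \<in> C" "edge_closed G Y" for C u v Y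
    using edge_closed_rtrancl components_on_rtrancl that by blast
  consider "q < p" | "p < q" | "p = q" by linarith
  then show False
  proof cases
    case 1
    have "\<not> u2 < q" using x_min \<open>q \<in> C1\<close> 1 p by (meson leD less_trans)
    then have "u2 \<in> {q<..p}" using \<open>q \<noteq> u2\<close> p by auto
    moreover have "u2' \<notin> {q<..p}" using p x w by auto
    ultimately show False
      using conn[OF w(2,9,10) edge_closed_arc[OF finS partS nc B(1) q B(2) 1, folded G_def]] by simp
  next
    case 2
    then have "x \<le> q" using x_min \<open>q \<in> C1\<close> p by auto
    then have "x \<in> {p<..q}" using p by simp
    moreover have "u1 \<notin> {p<..q}" using w p by auto
    ultimately show False
      using conn[OF w(1,7) x(1) edge_closed_arc[OF finS partS nc B(1,2) q 2, folded G_def]] by simp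
  next
    case 3
    then have "u2 < q" using p \<open>q \<noteq> u2\<close> by simp
    then have "x \<le> q" using x_min \<open>q \<in> C1\<close> by blast
    then show False using 3 p by simp
  qed
qed

lemma interlace_cases:
  "Z \<in> interlace N T \<Longrightarrow> (\<exists>C\<in>N. Z = (\<lambda>i. 2 * i - 1) ` C) \<or> (\<exists>B\<in>T. Z = (\<lambda>i. 2 * i) ` B)"
  unfolding interlace_def by auto

lemma crossing_interlaceD:
  assumes "crossing (interlace N T)" "\<forall>C\<in>N. 0 \<notin> C"
  shows "crossing N \<or> crossing T \<or>
    (\<exists>C\<in>N. \<exists>B\<in>T. \<exists>u\<in>C. \<exists>u'\<in>C. \<exists>t\<in>B. \<exists>t'\<in>B. t < t' \<and> u \<in> {t<..t'} \<and> u' \<notin> {t<..t'})"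
proof -
  obtain Z1 Z2 i j i' j' where w: "Z1 \<in> interlace N T" "Z2 \<in> interlace N T" "Z1 \<noteq> Z2"
    "i < j" "j < i'" "i' < j'" "i \<in> Z1" "i' \<in> Z1" "j \<in> Z2" "j' \<in> Z2"
    using assms(1) by (rule crossingE)
  have pos: "1 \<le> u" if "C \<in> N" "u \<in> C" for C u using assms(2) that by (cases u) auto
  consider (NN) C1 C2 where "C1 \<in> N" "Z1 = (\<lambda>i. 2 * i - 1) ` C1" "C2 \<in> N" "Z2 = (\<lambda>i. 2 * i - 1) ` C2"
    | (TT) B1 B2 where "B1 \<in> T" "Z1 = (\<lambda>i. 2 * i) ` B1" "B2 \<in> T" "Z2 = (\<lambda>i. 2 * i) ` B2"
    | (NT) C B where "C \<in> N" "Z1 = (\<lambda>i. 2 * i - 1) ` C" "B \<in> T" "Z2 = (\<lambda>i. 2 * i) ` B"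
    | (TN) B C where "B \<in> T" "Z1 = (\<lambda>i. 2 * i) ` B" "C \<in> N" "Z2 = (\<lambda>i. 2 * i - 1) ` C"
    using interlace_cases[OF w(1)] interlace_cases[OF w(2)] by (elim disjE bexE) metis+
  then show ?thesis
  proof cases
    case NN
    then obtain a a' b b' where ab: "a \<in> C1" "a' \<in> C1" "b \<in> C2" "b' \<in> C2"
      "i = 2*a - 1" "i' = 2*a' - 1" "j = 2*b - 1" "j' = 2*b' - 1" using w by blast
    moreover have "1 \<le> a" "1 \<le> a'" "1 \<le> b" "1 \<le> b'" using pos NN ab by blast+
    ultimately have "a < b" "b < a'" "a' < b'" using w(4-6) by linarith+
    then show ?thesis using crossingI[OF NN(1,3)] ab w(3) NN by blast
  next
    case TT
    then obtain a a' b b' where "a \<in> B1" "a' \<in> B1" "b \<in> B2" "b' \<in> B2"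
      "i = 2*a" "i' = 2*a'" "j = 2*b" "j' = 2*b'" using w by blast
    moreover from this have "a < b" "b < a'" "a' < b'" using w by linarith+
    ultimately show ?thesis using crossingI[OF TT(1,3)] w(3) TT by blast
  next
    case NT
    then obtain u u' t t' where ut: "u \<in> C" "u' \<in> C" "t \<in> B" "t' \<in> B"
      "i = 2*u - 1" "i' = 2*u' - 1" "j = 2*t" "j' = 2*t'" using w by blast
    moreover have "1 \<le> u" "1 \<le> u'" using pos NT(1) ut by blast+
    ultimately have "u \<le> t" "t < u'" "u' \<le> t'" using w(4-6) by linarith+
    then have "t < t'" "u' \<in> {t<..t'}" "u \<notin> {t<..t'}" by auto
    then show ?thesis using NT(1,3) ut(1-4) by blast
  next
    case TN
    then obtain u u' t t' where ut: "u \<in> C" "u' \<in> C" "t \<in> B" "t' \<in> B"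
      "j = 2*u - 1" "j' = 2*u' - 1" "i = 2*t" "i' = 2*t'" using w by blast
    moreover have "1 \<le> u" "1 \<le> u'" using pos TN(3) ut by blast+
    ultimately have "t < u" "u \<le> t'" "t' < u'" using w(4-6) by linarith+
    then have "t < t'" "u \<in> {t<..t'}" "u' \<notin> {t<..t'}" by auto
    then show ?thesis using TN(1,3) ut(1-4) by blast
  qed
qed

lemma crossing_interlaceI:
  assumes "C \<in> N" "B \<in> T" "u \<in> C" "u' \<in> C" "t \<in> B" "t' \<in> B" "t < t'" "u \<in> {t<..t'}" "u' \<notin> {t<..t'}"
    "0 \<notin> C"
  shows "crossing (interlace N T)"
proof -
  have in_lace: "(\<lambda>i. 2 * i - 1) ` C \<in> interlace N T" "(\<lambda>i. 2 * i) ` B \<in> interlace N T"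
    using assms(1,2) by (auto simp: interlace_def)
  have pos: "1 \<le> u" "1 \<le> u'" using assms(3,4,10) by (cases u; cases u'; auto)+
  have ne: "(\<lambda>i. 2 * i - 1) ` C \<noteq> (\<lambda>i. 2 * i) ` B"
  proof
    assume "(\<lambda>i. 2 * i - 1) ` C = (\<lambda>i. 2 * i) ` B"
    moreover have "2 * t \<in> (\<lambda>i. 2 * i) ` B" using assms(5) by blast
    ultimately have "2 * t \<in> (\<lambda>i. 2 * i - 1) ` C" by simp
    then obtain c where "c \<in> C" "2 * t = 2 * c - 1" by blast
    moreover have "1 \<le> c" using \<open>c \<in> C\<close> assms(10) by (cases c) auto
    ultimately show False by presburger
  qed
  consider "u' \<le> t" | "t' < u'" using assms(9) by fastforce
  then show ?thesis
  proof cases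
    case 1
    then show ?thesis using pos assms(3-8)
      by (intro crossingI[OF in_lace ne, of "2*u' - 1" "2*t" "2*u - 1" "2*t'"]) auto
  next
    case 2
    then show ?thesis using pos assms(3-8)
      by (intro crossingI[OF in_lace(2,1) ne[symmetric], of "2*t" "2*u - 1" "2*t'" "2*u' - 1"]) auto
  qed
qed

lemma refines_antisym:
  assumes "partition_on A P" "partition_on A Q" "refines P Q" "refines Q P"
  shows "P = Q"
proof -
  have "X \<in> Q" if P: "partition_on A P" "refines P Q" "refines Q P" "X \<in> P" for P Q X
  proof -
    obtain C where C: "C \<in> Q" "X \<subseteq> C" using P(2,4) unfolding refines_def by blast
    obtain X' where X': "X' \<in> P" "C \<subseteq> X'" using P(3) C(1) unfolding refines_def by blast
    have "X \<inter> X' \<noteq> {}" using partition_on_nonemptyD[OF P(1,4)] C X' by auto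
    then have "X = X'" using partition_on_disjointD[OF P(1,4) X'(1)] by blast
    then show ?thesis using C X' by auto
  qed
  then show ?thesis using assms by blast
qed

context
  fixes k :: nat and P :: "nat set set"
  assumes partP: "partition_on {1..k} P" and ncP: "\<not> crossing P"
begin

lemma components_canon_subset: "C \<in> canon_components {1..k} P \<Longrightarrow> C \<subseteq> {1..k}"
  using components_on_subset union_canon_graph_subset[OF _ partP] by simp

lemma kreweras_admissible_P: "kreweras_admissible k (canon_components {1..k} P) P"
  unfolding kreweras_admissible_def
proof
  show "partition_on {1..k} P" by (rule partP)
  have no_0: "\<forall>C\<in>canon_components {1..k} P. 0 \<notin> C" using components_canon_subset by fastforce
  show "\<not> crossing (interlace (canon_components {1..k} P) P)"
  proof
    assume "crossing (interlace (canon_components {1..k} P) P)"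
    moreover have "\<not> crossing (canon_components {1..k} P)" using not_crossing_components_canon_graph[OF _ partP ncP] by simp
    ultimately obtain C B u u' t t' where "C \<in> canon_components {1..k} P" "B \<in> P" "u \<in> C" "u' \<in> C" "t \<in> B" "t' \<in> B" "t < t'"
      "u \<in> {t<..t'}" "u' \<notin> {t<..t'}"
      using crossing_interlaceD[OF _ no_0] ncP by blast
    moreover from this have "(u, u') \<in> (madj (union_graph P (canon_graph {1..k})))\<^sup>*"
      using components_on_rtrancl by blast
    ultimately show False
      using edge_closed_rtrancl[OF edge_closed_arc[OF _ partP ncP]] by blast
  qed
qed

lemma refines_if_kreweras_admissible:
  assumes "kreweras_admissible k (canon_components {1..k} P) T"
  shows "refines T P"
  unfolding refines_def
proof
  fix Z assume Z: "Z \<in> T"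
  have partT: "partition_on {1..k} T" and ncT: "\<not> crossing (interlace (canon_components {1..k} P) T)"
    using assms by (simp_all add: kreweras_admissible_def)
  obtain z where z: "z \<in> Z" using partition_on_nonemptyD[OF partT Z] by auto
  have ZS: "Z \<subseteq> {1..k}" using partition_on_subsetD[OF partT Z] .
  have "Z \<subseteq> block_of P z"
  proof
    fix w assume w: "w \<in> Z"
    show "w \<in> block_of P z"
    proof (rule ccontr)
      assume w_notin: "w \<notin> block_of P z"
      define t where "t = min z w"
      define t' where "t' = max z w"
      have "w \<in> {1..k}" using w ZS by blast
      then have "block_of P w \<noteq> block_of P z" using w_notin block_of_in(2)[OF partP] by metis
      then have zw: "z \<noteq> w" "block_of P t \<noteq> block_of P t'"
        by (auto simp: t_def t'_def min_def max_def)
      have t: "t < t'" "t \<in> Z" "t' \<in> Z" "t \<in> {1..k}" "t' \<in> {1..k}"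
        using zw(1) z w ZS by (auto simp: t_def t'_def min_def max_def)
      define B where "B = block_of P t"
      have B: "B \<in> P" "t \<in> B" using block_of_in[OF partP t(4)] by (auto simp: B_def)
      have "t' \<notin> B" using zw(2) block_of_eq[OF partP B(1)] unfolding B_def by metis
      then obtain b where b: "b \<in> B" "cyc_next {1..k} b \<in> {t<..t'}" "cyc_next B b \<notin> {t<..t'}"
        using arc_edge_leaving[OF _ partP B t(5) _ t(1)] by blast
      define G where "G = union_graph P (canon_graph {1..k})"
      have "{cyc_next {1..k} b, cyc_next B b} \<in># G"
        using mem_union_canon_graph[OF _ partP B(1) b(1)] by (simp add: G_def)
      then have edge: "(cyc_next {1..k} b, cyc_next B b) \<in> madj G" by (auto simp: madj_def)
      have "cyc_next {1..k} b \<in> {1..k}" using cyc_next_in[of "{1..k}"] t(4) by blast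
      then have C: "(madj G)\<^sup>* `` {cyc_next {1..k} b} \<in> canon_components {1..k} P" by (auto simp: components_on_def quotient_def G_def)
      have "0 \<notin> (madj G)\<^sup>* `` {cyc_next {1..k} b}" using components_canon_subset[OF C] by auto
      then have "crossing (interlace (canon_components {1..k} P) T)"
        using crossing_interlaceI[OF C Z _ _ t(2,3,1) b(2,3)] edge by blast
      then show False using ncT by simp
    qed
  qed
  then show "\<exists>C\<in>P. Z \<subseteq> C" using block_of_in[OF partP] z ZS by blast
qed

lemma kreweras_components_canon: "kreweras k (canon_components {1..k} P) = P"
  unfolding kreweras_def
proof (rule the_equality)
  show "kreweras_admissible k (canon_components {1..k} P) P \<and> (\<forall>T. kreweras_admissible k (canon_components {1..k} P) T \<longrightarrow> refines T P)"
    using kreweras_admissible_P refines_if_kreweras_admissible by blast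
  fix Q assume Q: "kreweras_admissible k (canon_components {1..k} P) Q \<and>
    (\<forall>T. kreweras_admissible k (canon_components {1..k} P) T \<longrightarrow> refines T Q)"
  then have "partition_on {1..k} Q" "refines P Q" "refines Q P"
    using kreweras_admissible_P refines_if_kreweras_admissible by (auto simp: kreweras_admissible_def)
  then show "Q = P" using refines_antisym[OF partP] by metis
qed

end

section \<open>Consistent graphs on {1..k}\<close>

lemma mult_pi_eq_of_bool:
  assumes "partition_on {1..k} P" "B \<in> P" "l \<in> B \<or> cprev k l \<in> B"
  shows "mult_pi k P l = of_bool (l \<in> B) + of_bool (cprev k l \<in> B)"
proof -
  have "(\<exists>B'\<in>P. l \<in> B' \<and> cprev k l \<in> B') \<longleftrightarrow> (l \<in> B \<and> cprev k l \<in> B)"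
    using assms partition_on_disjointD[OF assms(1) _ assms(2)] by blast
  then show ?thesis using assms(3) unfolding mult_pi_def by auto
qed

lemma mem_closed_block_iff:
  "l \<in> {1..k} \<Longrightarrow> l \<in> closed_block k B \<longleftrightarrow> l \<in> B \<or> cprev k l \<in> B"
  by (auto simp: closed_block_def)

lemma consistent_imp_consistent_on:
  assumes partP: "partition_on {1..k} P" and cons: "consistent k P G"
  obtains E where "consistent_on {1..k} P E" "G = union_graph P E"
proof -
  obtain E where E: "G = (\<Sum>B\<in>P. E B)"
    "\<forall>B\<in>P. (\<forall>e\<in>#E B. e \<subseteq> closed_block k B) \<and> (\<forall>l\<in>closed_block k B. mdeg (E B) l = mult_pi k P l)"
    using cons unfolding consistent_def by blast
  have "consistent_on {1..k} P E"
    unfolding consistent_on_def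
  proof (rule conjI; intro ballI)
    fix B e assume "B \<in> P" "e \<in># E B"
    then have "e \<in># G" using mem_union_graph[OF finite_elements[OF _ partP]] E(1) by (simp add: union_graph_def)
    then show "e \<subseteq> {1..k} \<and> (card e = 1 \<or> card e = 2)" using cons unfolding consistent_def is_mgraph_def by blast
  next
    fix B v assume B: "B \<in> P" and v: "v \<in> {1..k}"
    show "mdeg (E B) v = of_bool (v \<in> B) + of_bool (cyc_prev {1..k} v \<in> B)"
    proof (cases "v \<in> B \<or> cprev k v \<in> B")
      case True
      then show ?thesis using E(2) B mult_pi_eq_of_bool[OF partP B True] mem_closed_block_iff[OF v]
        cyc_prev_atLeastAtMost[OF v] by simp
    next
      case False
      then have "\<forall>e\<in>#E B. v \<notin> e" using E(2) B mem_closed_block_iff[OF v] by blast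
      then have "mdeg (E B) v = 0" by (rule mdeg_eq_0_if_not_mem)
      then show ?thesis using False cyc_prev_atLeastAtMost[OF v] by simp
    qed
  qed
  then show ?thesis using that E(1) by (simp add: union_graph_def)
qed

lemma consistent_union_graph:
  assumes partP: "partition_on {1..k} P" and consE: "consistent_on {1..k} P E"
  shows "consistent k P (union_graph P E)"
proof -
  have finP: "finite P" using finite_elements[OF _ partP] by simp
  have edges: "e \<subseteq> {1..k} \<and> (card e = 1 \<or> card e = 2)" if "e \<in># union_graph P E" for e
    using mem_union_graphE[OF finP that] consE unfolding consistent_on_def by blast
  have mdeg_E: "mdeg (E B) v = of_bool (v \<in> B) + of_bool (cprev k v \<in> B)" if "B \<in> P" "v \<in> {1..k}" for B v
    using consE that cyc_prev_atLeastAtMost unfolding consistent_on_def by auto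
  have "mdeg (union_graph P E) v = 2" if v: "v \<in> {1..k}" for v
  proof -
    have "cprev k v \<in> {1..k}" using v by (auto simp: cprev_def)
    then show ?thesis
      using mdeg_E v sum_of_bool_mem_block[OF partP finP] sum_of_bool_mem_block[OF partP finP v]
      unfolding union_graph_def mdeg_sum[OF finP] by (simp add: sum.distrib)
  qed
  then have "2 * size (union_graph P E) = 2 * k"
    using sum_mdeg_eq_twice_size[of "union_graph P E" "{1..k}"] edges by simp
  then have size: "size (union_graph P E) = k" by simp
  have blocks: "\<forall>B\<in>P. (\<forall>e\<in>#E B. e \<subseteq> closed_block k B) \<and>
      (\<forall>l\<in>closed_block k B. mdeg (E B) l = mult_pi k P l)"
  proof
    fix B assume B: "B \<in> P"
    show "(\<forall>e\<in>#E B. e \<subseteq> closed_block k B) \<and> (\<forall>l\<in>closed_block k B. mdeg (E B) l = mult_pi k P l)"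
    proof (intro conjI ballI subsetI)
      fix e u assume e: "e \<in># E B" and u: "u \<in> e"
      have uS: "u \<in> {1..k}" using consE B e u unfolding consistent_on_def by blast
      have "mdeg (E B) u \<ge> 1" using mdeg_ge_1_if_mem[OF e u] .
      then have "u \<in> B \<or> cprev k u \<in> B" using mdeg_E[OF B uS] by (auto simp: of_bool_def split: if_splits)
      then show "u \<in> closed_block k B" using mem_closed_block_iff[OF uS] by blast
    next
      fix l assume l: "l \<in> closed_block k B"
      then have "l \<in> {1..k}" using partition_on_subsetD[OF partP B] by (auto simp: closed_block_def)
      then show "mdeg (E B) l = mult_pi k P l"
        using mult_pi_eq_of_bool[OF partP B] mem_closed_block_iff l mdeg_E[OF B] by simp
    qed
  qed
  show ?thesis unfolding consistent_def is_mgraph_def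
  proof (intro conjI)
    show "\<forall>e\<in>#union_graph P E. e \<subseteq> {1..k} \<and> (card e = 1 \<or> card e = 2)" using edges by blast
    show "size (union_graph P E) = k" by (rule size)
    show "\<exists>E'. union_graph P E = (\<Sum>B\<in>P. E' B) \<and>
      (\<forall>B\<in>P. (\<forall>e\<in>#E' B. e \<subseteq> closed_block k B) \<and> (\<forall>l\<in>closed_block k B. mdeg (E' B) l = mult_pi k P l))"
      using blocks unfolding union_graph_def by blast
  qed
qed

lemma mem_Istar_iff:
  assumes "partition_on {1..k} P"
  shows "G \<in> Istar k P \<longleftrightarrow> (\<exists>E. consistent_on {1..k} P E \<and> G = union_graph P E \<and>
    card (components_on {1..k} G) + card P = k + 1)"
proof -
  have "card P \<le> k" using card_partition_on_le[OF _ assms] by simp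
  then have "card (components k G) = k - card P + 1 \<longleftrightarrow> card (components_on {1..k} G) + card P = k + 1"
    unfolding components_def components_on_def by linarith
  moreover have "consistent k P G \<longleftrightarrow> (\<exists>E. consistent_on {1..k} P E \<and> G = union_graph P E)"
    using consistent_imp_consistent_on[OF assms, of G] consistent_union_graph[OF assms] by blast
  ultimately show ?thesis unfolding Istar_def by blast
qed

lemma Istar_crossing:
  assumes "partition_on {1..k} P" "crossing P"
  shows "Istar k P = {}"
proof (rule ccontr)
  assume "Istar k P \<noteq> {}"
  then obtain G where "G \<in> Istar k P" by blast
  then obtain E where E: "consistent_on {1..k} P E" "G = union_graph P E"
    "card (components_on {1..k} G) + card P = k + 1"
    by (subst (asm) mem_Istar_iff[OF assms(1)]) blast
  obtain X i where "X \<in> P" "i \<in> X" using assms(2) unfolding crossing_def by blast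
  then have "{1..k} \<noteq> {}" using partition_on_subsetD[OF assms(1)] by blast
  then have "component_bound {1..k} P E" using component_bound[OF _ _ assms(1) E(1)] by simp
  then show False using E(2,3) assms(2) unfolding component_bound_def by simp
qed

lemma Istar_not_crossing:
  assumes "k \<ge> 1" "partition_on {1..k} P" "\<not> crossing P"
  shows "Istar k P = {union_graph P (canon_graph {1..k})}"
proof (intro equalityI subsetI)
  have ne: "{1..k} \<noteq> {}" using assms(1) by simp
  fix G assume "G \<in> Istar k P"
  then obtain E where E: "consistent_on {1..k} P E" "G = union_graph P E"
    "card (components_on {1..k} G) + card P = k + 1"
    by (subst (asm) mem_Istar_iff[OF assms(2)]) blast
  have "component_bound {1..k} P E" using component_bound[OF _ ne assms(2) E(1)] by simp
  then have "\<forall>B\<in>P. E B = canon_graph {1..k} B" using E(2,3) unfolding component_bound_def by simp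
  then have "union_graph P E = union_graph P (canon_graph {1..k})"
    unfolding union_graph_def by (intro sum.cong) auto
  then show "G \<in> {union_graph P (canon_graph {1..k})}" using E(2) by simp
next
  fix G assume G: "G \<in> {union_graph P (canon_graph {1..k})}"
  have "card (canon_components {1..k} P) + card P = k + 1"
    using card_components_canon_graph[OF _ _ assms(2,3)] assms(1) by simp
  then show "G \<in> Istar k P"
    using G consistent_on_canon_graph[OF _ assms(2)] by (subst mem_Istar_iff[OF assms(2)]) auto
qed

theorem mainTheorem3:
  fixes k :: nat and P :: "nat set set"
  assumes "k \<ge> 1" and "partition_on {1..k} P"
  shows "(crossing P \<longrightarrow> Istar k P = {}) \<and>
         (\<not> crossing P \<longrightarrow>
            (\<exists>G. Istar k P = {G} \<and> P = kreweras k (components k G)))"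
proof (intro conjI impI)
  show "crossing P \<Longrightarrow> Istar k P = {}" using Istar_crossing[OF assms(2)] .
  assume nc: "\<not> crossing P"
  have "components k (union_graph P (canon_graph {1..k})) = canon_components {1..k} P"
    by (simp add: components_def components_on_def)
  then show "\<exists>G. Istar k P = {G} \<and> P = kreweras k (components k G)"
    using Istar_not_crossing[OF assms nc] kreweras_components_canon[OF assms(2) nc] by auto
qed

end
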